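(* With $R$, $I$, $\Gamma$, $\mathcal{C}$, $\mathcal{D}$ and $\Xi:\mathcal{C}\to\mathcal{D}$ as in the context, define $\Psi:\mathcal{D}\to\mathcal{C}$ as follows. For $\rho=(M_u,M_v,\psi_e,\psi_f)\in\mathcal{D}$, let $M=(S_1\otimes_{\mathbb{K}}M_u)\oplus M_v$ with $x((rf_1)\otimes m_u,m_v)=((xrf_1)\otimes m_u,\psi_f(m_v))$ and $y((rf_1)\otimes m_u,m_v)=((yrf_1)\otimes m_u+f_1\otimes\psi_e(m_v),\psi_f^{-1}(m_v))$, and let $\alpha$ be the inclusion of $M_v$ into $M$ (with $M/IM$ identified with $M_v$); set $\Psi(\rho)=(M,\alpha)$. For a morphism $\varphi=(\varphi_u,\varphi_v)$ in $\mathcal{D}$ set $\Psi(\varphi)=(\mathrm{id}_{S_1}\otimes\varphi_u)\oplus\varphi_v$. Then $\Psi$ is a functor $\mathcal{D}\to\mathcal{C}$, and $\Xi$ and $\Psi$ induce an equivalence of categories $\mathcal{C}\cong\mathcal{D}$.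
   Context: $\mathbb{K}$ is a field, $R=\mathbb{K}\langle x,y\rangle/(xy-1)$, $I=\langle1-yx\rangle$, $f_1=1-yx$, $S_1=Rf_1$. $\Gamma$ is the quiver with vertices $u,v$, an arrow $e:v\to u$ and a loop $f$ at $v$; a representation is $(M_u,M_v,\psi_e:M_v\to M_u,\psi_f:M_v\to M_v)$, and $\mathcal{D}$ is the full subcategory of representations with $\psi_f$ invertible. $\mathcal{C}$ is the category whose objects are weak splitting pairs $(M,\alpha)$: $M$ a left $R$-module and $\alpha:M/IM\to M$ a $\mathbb{K}[x]$-linear splitting of $M\to M/IM$; morphisms $(M,\alpha)\to(N,\beta)$ are $R$-linear $\varphi:M\to N$ with $\operatorname{im}(\varphi\circ\alpha)\subseteq\operatorname{im}\beta$. $\Xi(M,\alpha)=(M_0,\operatorname{im}\alpha,\psi_e,\psi_f)$, where $M_0=\{m\in M:xm=0\}$, $\psi_f$ is multiplication by $x$ on $\operatorname{im}\alpha$, and $\psi_e(m)=m_1$ where $ym=m_1+m_2$ with $m_1\in IM$, $m_2\in\operatorname{im}\alpha$; on morphisms $\Xi$ takes restrictions to $M_0$ and $\operatorname{im}\alpha$. *)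

theory Defs
  imports Main "HOL-Library.Function_Algebras" "HOL-Library.Product_Plus"
begin

definition kspace :: "('k::field \<Rightarrow> 'v::ab_group_add \<Rightarrow> 'v) \<Rightarrow> 'v set \<Rightarrow> bool" where
  "kspace s V \<longleftrightarrow> 0 \<in> V \<and> (\<forall>a\<in>V. \<forall>b\<in>V. a + b \<in> V) \<and> (\<forall>a\<in>V. - a \<in> V)
     \<and> (\<forall>c. \<forall>a\<in>V. s c a \<in> V)
     \<and> (\<forall>c. \<forall>a\<in>V. \<forall>b\<in>V. s c (a + b) = s c a + s c b)
     \<and> (\<forall>c d. \<forall>a\<in>V. s (c + d) a = s c a + s d a)
     \<and> (\<forall>c d. \<forall>a\<in>V. s c (s d a) = s (c * d) a)
     \<and> (\<forall>a\<in>V. s 1 a = a)"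

definition subsp :: "('k::field \<Rightarrow> 'v::ab_group_add \<Rightarrow> 'v) \<Rightarrow> 'v set \<Rightarrow> 'v set \<Rightarrow> bool" where
  "subsp s W V \<longleftrightarrow> W \<subseteq> V \<and> 0 \<in> W \<and> (\<forall>a\<in>W. \<forall>b\<in>W. a + b \<in> W) \<and> (\<forall>c. \<forall>a\<in>W. s c a \<in> W)"

definition klin :: "('k::field \<Rightarrow> 'a::ab_group_add \<Rightarrow> 'a) \<Rightarrow> ('k \<Rightarrow> 'b::ab_group_add \<Rightarrow> 'b)
    \<Rightarrow> 'a set \<Rightarrow> 'b set \<Rightarrow> ('a \<Rightarrow> 'b) \<Rightarrow> bool" where
  "klin s1 s2 V W f \<longleftrightarrow> f ` V \<subseteq> W \<and> (\<forall>a\<in>V. \<forall>b\<in>V. f (a + b) = f a + f b)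
     \<and> (\<forall>c. \<forall>a\<in>V. f (s1 c a) = s2 c (f a))"

text \<open>A left R-module is a K-vector space with K-linear operators x, y such that x(y m) = m.\<close>
record ('k, 'm) rmod =
  car :: "'m set"
  sc :: "'k \<Rightarrow> 'm \<Rightarrow> 'm"
  xo :: "'m \<Rightarrow> 'm"
  yo :: "'m \<Rightarrow> 'm"

definition is_rmod :: "('k::field, 'm::ab_group_add) rmod \<Rightarrow> bool" where
  "is_rmod M \<longleftrightarrow> kspace (sc M) (car M)
     \<and> klin (sc M) (sc M) (car M) (car M) (xo M)
     \<and> klin (sc M) (sc M) (car M) (car M) (yo M)
     \<and> (\<forall>m\<in>car M. xo M (yo M m) = m)"

definition rlin :: "('k::field, 'm::ab_group_add) rmod \<Rightarrow> ('k, 'n::ab_group_add) rmod \<Rightarrow> ('m \<Rightarrow> 'n) \<Rightarrow> bool" where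
  "rlin M N f \<longleftrightarrow> klin (sc M) (sc N) (car M) (car N) f
     \<and> (\<forall>m\<in>car M. f (xo M m) = xo N (f m) \<and> f (yo M m) = yo N (f m))"

text \<open>IM for the two-sided ideal I generated by f1 = 1 - yx: the R-submodule of M
  generated by f1 M = {m - y(x m)} (since I M = R f1 R M = R f1 M).\<close>
definition IM :: "('k::field, 'm::ab_group_add) rmod \<Rightarrow> 'm set" where
  "IM M = \<Inter>{N. subsp (sc M) N (car M) \<and> xo M ` N \<subseteq> N \<and> yo M ` N \<subseteq> N
              \<and> (\<lambda>m. m - yo M (xo M m)) ` car M \<subseteq> N}"

definition cos :: "'m::ab_group_add set \<Rightarrow> 'm \<Rightarrow> 'm set" where
  "cos N m = (\<lambda>n. m + n) ` N"

definition quot :: "('k::field, 'm::ab_group_add) rmod \<Rightarrow> 'm set set" where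
  "quot M = cos (IM M) ` car M"

definition imal :: "('k::field, 'm::ab_group_add) rmod \<Rightarrow> ('m set \<Rightarrow> 'm) \<Rightarrow> 'm set" where
  "imal M \<alpha> = \<alpha> ` quot M"

text \<open>alpha : M/IM -> M is a K[x]-linear splitting of the projection M -> M/IM
  (the quotient operations are induced by representatives).\<close>
type_synonym ('k, 'm) cob = "('k, 'm) rmod \<times> ('m set \<Rightarrow> 'm)"

definition wsp :: "('k::field, 'm::ab_group_add) rmod \<Rightarrow> ('m set \<Rightarrow> 'm) \<Rightarrow> bool" where
  "wsp M \<alpha> \<longleftrightarrow> is_rmod M
     \<and> (\<forall>m\<in>car M. \<alpha> (cos (IM M) m) \<in> car M \<and> \<alpha> (cos (IM M) m) - m \<in> IM M)
     \<and> (\<forall>m1\<in>car M. \<forall>m2\<in>car M.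
          \<alpha> (cos (IM M) (m1 + m2)) = \<alpha> (cos (IM M) m1) + \<alpha> (cos (IM M) m2))
     \<and> (\<forall>c. \<forall>m\<in>car M. \<alpha> (cos (IM M) (sc M c m)) = sc M c (\<alpha> (cos (IM M) m)))
     \<and> (\<forall>m\<in>car M. \<alpha> (cos (IM M) (xo M m)) = xo M (\<alpha> (cos (IM M) m)))"

definition cobj :: "('k::field, 'm::ab_group_add) rmod \<times> ('m set \<Rightarrow> 'm) \<Rightarrow> bool" where
  "cobj A \<longleftrightarrow> wsp (fst A) (snd A)"

definition cmor :: "('k::field, 'm::ab_group_add) rmod \<times> ('m set \<Rightarrow> 'm)
    \<Rightarrow> ('k, 'n::ab_group_add) rmod \<times> ('n set \<Rightarrow> 'n) \<Rightarrow> ('m \<Rightarrow> 'n) \<Rightarrow> bool" where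
  "cmor A B f \<longleftrightarrow> rlin (fst A) (fst B) f \<and> f ` imal (fst A) (snd A) \<subseteq> imal (fst B) (snd B)"

definition ciso :: "('k::field, 'm::ab_group_add) rmod \<times> ('m set \<Rightarrow> 'm)
    \<Rightarrow> ('k, 'n::ab_group_add) rmod \<times> ('n set \<Rightarrow> 'n) \<Rightarrow> ('m \<Rightarrow> 'n) \<Rightarrow> bool" where
  "ciso A B f \<longleftrightarrow> cmor A B f \<and> (\<exists>g. cmor B A g \<and> (\<forall>a\<in>car (fst A). g (f a) = a)
                                   \<and> (\<forall>b\<in>car (fst B). f (g b) = b))"

record ('k, 'u, 'v) rep =
  Mu :: "'u set"
  Mv :: "'v set"
  scu :: "'k \<Rightarrow> 'u \<Rightarrow> 'u"
  scv :: "'k \<Rightarrow> 'v \<Rightarrow> 'v"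
  pe :: "'v \<Rightarrow> 'u"
  pf :: "'v \<Rightarrow> 'v"

definition drep :: "('k::field, 'u::ab_group_add, 'v::ab_group_add) rep \<Rightarrow> bool" where
  "drep r \<longleftrightarrow> kspace (scu r) (Mu r) \<and> kspace (scv r) (Mv r)
     \<and> klin (scv r) (scu r) (Mv r) (Mu r) (pe r)
     \<and> klin (scv r) (scv r) (Mv r) (Mv r) (pf r)
     \<and> bij_betw (pf r) (Mv r) (Mv r)"

definition dmor :: "('k::field, 'u::ab_group_add, 'v::ab_group_add) rep
    \<Rightarrow> ('k, 'u2::ab_group_add, 'v2::ab_group_add) rep \<Rightarrow> ('u \<Rightarrow> 'u2) \<times> ('v \<Rightarrow> 'v2) \<Rightarrow> bool" where
  "dmor r s f \<longleftrightarrow> klin (scu r) (scu s) (Mu r) (Mu s) (fst f)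
     \<and> klin (scv r) (scv s) (Mv r) (Mv s) (snd f)
     \<and> (\<forall>v\<in>Mv r. fst f (pe r v) = pe s (snd f v) \<and> snd f (pf r v) = pf s (snd f v))"

definition diso :: "('k::field, 'u::ab_group_add, 'v::ab_group_add) rep
    \<Rightarrow> ('k, 'u2::ab_group_add, 'v2::ab_group_add) rep \<Rightarrow> ('u \<Rightarrow> 'u2) \<times> ('v \<Rightarrow> 'v2) \<Rightarrow> bool" where
  "diso r s f \<longleftrightarrow> dmor r s f \<and> (\<exists>g. dmor s r g
     \<and> (\<forall>a\<in>Mu r. fst g (fst f a) = a) \<and> (\<forall>a\<in>Mv r. snd g (snd f a) = a)
     \<and> (\<forall>b\<in>Mu s. fst f (fst g b) = b) \<and> (\<forall>b\<in>Mv s. snd f (snd g b) = b))"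

definition Xi :: "('k::field, 'm::ab_group_add) rmod \<times> ('m set \<Rightarrow> 'm) \<Rightarrow> ('k, 'm, 'm) rep" where
  "Xi A = (case A of (M, \<alpha>) \<Rightarrow>
     \<lparr> Mu = {m \<in> car M. xo M m = 0},
       Mv = imal M \<alpha>,
       scu = sc M, scv = sc M,
       pe = (\<lambda>m. THE m1. m1 \<in> IM M \<and> yo M m - m1 \<in> imal M \<alpha>),
       pf = xo M \<rparr>)"

definition XiM :: "('m \<Rightarrow> 'n) \<Rightarrow> ('m \<Rightarrow> 'n) \<times> ('m \<Rightarrow> 'n)" where
  "XiM f = (f, f)"

text \<open>S1 = R f1 has K-basis y^a f1 (a in nat), so S1 (x)_K Mu is modelled as the finitely
  supported sequences g : nat -> Mu, g a being the coefficient of y^a f1.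
  Then x (y^a f1) = y^(a-1) f1 (a >= 1), x f1 = 0, y (y^a f1) = y^(a+1) f1.\<close>
definition Psi_mod :: "('k::field, 'u::ab_group_add, 'v::ab_group_add) rep \<Rightarrow> ('k, (nat \<Rightarrow> 'u) \<times> 'v) rmod" where
  "Psi_mod r =
     \<lparr> car = {(g, v). (\<forall>a. g a \<in> Mu r) \<and> finite {a. g a \<noteq> 0} \<and> v \<in> Mv r},
       sc = (\<lambda>c (g, v). (\<lambda>a. scu r c (g a), scv r c v)),
       xo = (\<lambda>(g, v). (\<lambda>a. g (Suc a), pf r v)),
       yo = (\<lambda>(g, v). (\<lambda>a. if a = 0 then pe r v else g (a - 1), the_inv_into (Mv r) (pf r) v)) \<rparr>"

text \<open>alpha: inclusion of Mv, with M/IM identified with Mv (a class is sent to (0, its Mv-component))\<close>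
definition Psi_alpha :: "((nat \<Rightarrow> 'u::ab_group_add) \<times> 'v) set \<Rightarrow> (nat \<Rightarrow> 'u) \<times> 'v" where
  "Psi_alpha c = (0, snd (SOME p. p \<in> c))"

definition Psi :: "('k::field, 'u::ab_group_add, 'v::ab_group_add) rep
    \<Rightarrow> ('k, (nat \<Rightarrow> 'u) \<times> 'v) rmod \<times> (((nat \<Rightarrow> 'u) \<times> 'v) set \<Rightarrow> (nat \<Rightarrow> 'u) \<times> 'v)" where
  "Psi r = (Psi_mod r, Psi_alpha)"

definition PsiM :: "('u \<Rightarrow> 'u2) \<times> ('v \<Rightarrow> 'v2) \<Rightarrow> (nat \<Rightarrow> 'u) \<times> 'v \<Rightarrow> (nat \<Rightarrow> 'u2) \<times> 'v2" where
  "PsiM f = (\<lambda>(g, v). (fst f \<circ> g, snd f v))"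

end

theory Submission
  imports Defs
begin

text \<open>
  In an R-module the submodule I M consists exactly of the elements killed by a power of x,
  and every such n expands uniquely as \<open>n = \<Sum>\<^sub>a y\<^sup>a f\<^sub>1(x\<^sup>a n)\<close> with coefficients
  in ker x (a telescoping identity, using \<open>x y = 1\<close>).  A weak splitting \<alpha> gives a
  K[x]-decomposition \<open>M = I M \<oplus> im \<alpha>\<close>, so \<open>\<Psi>(\<Xi>(M, \<alpha>)) = (S\<^sub>1 \<otimes> ker x) \<oplus> im \<alpha>\<close> maps
  isomorphically onto M by \<open>(y\<^sup>a f\<^sub>1 \<otimes> u, v) \<mapsto> y\<^sup>a u + v\<close>.  Conversely, in \<open>\<Psi>(\<rho>)\<close> the
  kernel of x is \<open>f\<^sub>1 \<otimes> M\<^sub>u\<close> and the splitting is \<open>M\<^sub>v\<close>, which recovers \<open>\<rho>\<close> from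
  \<open>\<Xi>(\<Psi>(\<rho>))\<close>.
\<close>

definition add_subgroup :: "'a::ab_group_add set \<Rightarrow> bool" where
  "add_subgroup V \<longleftrightarrow> 0 \<in> V \<and> (\<forall>a\<in>V. \<forall>b\<in>V. a + b \<in> V) \<and> (\<forall>a\<in>V. - a \<in> V)"

definition additive_on :: "'a::ab_group_add set \<Rightarrow> ('a \<Rightarrow> 'b::ab_group_add) \<Rightarrow> bool" where
  "additive_on V f \<longleftrightarrow> (\<forall>a\<in>V. \<forall>b\<in>V. f (a + b) = f a + f b)"

lemma
  assumes "add_subgroup V"
  shows add_subgroup_zero: "0 \<in> V"
    and add_subgroup_add: "a \<in> V \<Longrightarrow> b \<in> V \<Longrightarrow> a + b \<in> V"
    and add_subgroup_uminus: "a \<in> V \<Longrightarrow> - a \<in> V"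
    and add_subgroup_diff: "a \<in> V \<Longrightarrow> b \<in> V \<Longrightarrow> a - b \<in> V"
  using assms unfolding add_subgroup_def diff_conv_add_uminus by blast+

lemma sum_closed:
  assumes "0 \<in> V" "\<And>a b. a \<in> V \<Longrightarrow> b \<in> V \<Longrightarrow> a + b \<in> V" "\<And>i. i \<in> S \<Longrightarrow> h i \<in> V"
  shows "sum h S \<in> V"
  using assms(3) by (induction S rule: infinite_finite_induct) (simp_all add: assms(1,2))

lemma add_subgroup_sum: "add_subgroup V \<Longrightarrow> (\<And>i. i \<in> S \<Longrightarrow> h i \<in> V) \<Longrightarrow> sum h S \<in> V"
  using sum_closed[of V] add_subgroup_zero add_subgroup_add by blast

lemma additive_on_comp:
  "additive_on V f \<Longrightarrow> additive_on W g \<Longrightarrow> f ` V \<subseteq> W \<Longrightarrow> additive_on V (g \<circ> f)"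
  unfolding additive_on_def by (simp add: image_subset_iff)

lemma additive_on_funpow:
  assumes "additive_on V f" "f ` V \<subseteq> V"
  shows "additive_on V (f ^^ n)"
proof (induction n)
  case (Suc n)
  have "(f ^^ n) ` V \<subseteq> V"
    using assms(2) by (induction n) (auto simp: image_subset_iff)
  from additive_on_comp[OF Suc assms(1) this] show ?case by (simp add: comp_def)
qed (simp add: additive_on_def)

context
  fixes V :: "'a::ab_group_add set" and f :: "'a \<Rightarrow> 'b::ab_group_add"
  assumes V: "add_subgroup V" and f: "additive_on V f"
begin

lemma additive_on_add: "a \<in> V \<Longrightarrow> b \<in> V \<Longrightarrow> f (a + b) = f a + f b"
  using f unfolding additive_on_def by blast

lemma additive_on_zero: "f 0 = 0"
proof -
  have "f 0 + f 0 = f 0"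
    using additive_on_add[of 0 0] add_subgroup_zero[OF V] by simp
  then show ?thesis by simp
qed

lemma additive_on_uminus: "a \<in> V \<Longrightarrow> f (- a) = - f a"
proof -
  assume "a \<in> V"
  then have "f a + f (- a) = 0"
    using additive_on_add[of a "- a"] add_subgroup_uminus[OF V] additive_on_zero by simp
  then show ?thesis by (rule minus_unique[symmetric])
qed

lemma additive_on_diff:
  assumes "a \<in> V" "b \<in> V" shows "f (a - b) = f a - f b"
proof -
  have "f (a + - b) = f a + f (- b)"
    using additive_on_add assms add_subgroup_uminus[OF V] by blast
  then show ?thesis
    unfolding additive_on_uminus[OF assms(2)] diff_conv_add_uminus .
qed

lemma additive_on_sum: "(\<And>i. i \<in> S \<Longrightarrow> h i \<in> V) \<Longrightarrow> f (sum h S) = (\<Sum>i\<in>S. f (h i))"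
  by (induction S rule: infinite_finite_induct)
     (simp_all add: additive_on_zero additive_on_add add_subgroup_sum[OF V])

end

lemma
  assumes "kspace s V"
  shows kspace_zero: "0 \<in> V"
    and kspace_add: "a \<in> V \<Longrightarrow> b \<in> V \<Longrightarrow> a + b \<in> V"
    and kspace_uminus: "a \<in> V \<Longrightarrow> - a \<in> V"
    and kspace_scale: "a \<in> V \<Longrightarrow> s c a \<in> V"
    and kspace_scale_add: "a \<in> V \<Longrightarrow> b \<in> V \<Longrightarrow> s c (a + b) = s c a + s c b"
  using assms unfolding kspace_def by blast+

lemma kspace_add_subgroup: "kspace s V \<Longrightarrow> add_subgroup V"
  unfolding kspace_def add_subgroup_def by blast

lemma kspace_scale_additive: "kspace s V \<Longrightarrow> additive_on V (s c)"
  unfolding kspace_def additive_on_def by blast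

lemma kspace_scale_zero: "kspace s V \<Longrightarrow> s c 0 = 0"
  using additive_on_zero[OF kspace_add_subgroup kspace_scale_additive] .

lemma kspace_scale_diff: "kspace s V \<Longrightarrow> a \<in> V \<Longrightarrow> b \<in> V \<Longrightarrow> s c (a - b) = s c a - s c b"
  using additive_on_diff[OF kspace_add_subgroup kspace_scale_additive] .

lemma kspace_subspace:
  assumes "kspace s V" "W \<subseteq> V" "add_subgroup W" "\<And>c a. a \<in> W \<Longrightarrow> s c a \<in> W"
  shows "kspace s W"
  using assms unfolding kspace_def add_subgroup_def by (meson subsetD)

lemma kspace_Times:
  assumes "kspace s1 U" "kspace s2 V"
  shows "kspace (\<lambda>c (a, b). (s1 c a, s2 c b)) (U \<times> V)"
  using assms unfolding kspace_def by (simp add: split_paired_all zero_prod_def)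

lemma
  assumes "klin s1 s2 V W f"
  shows klin_closed: "a \<in> V \<Longrightarrow> f a \<in> W"
    and klin_add: "a \<in> V \<Longrightarrow> b \<in> V \<Longrightarrow> f (a + b) = f a + f b"
    and klin_scale: "a \<in> V \<Longrightarrow> f (s1 c a) = s2 c (f a)"
  using assms unfolding klin_def by blast+

lemma klin_additive_on: "klin s1 s2 V W f \<Longrightarrow> additive_on V f"
  unfolding klin_def additive_on_def by blast

lemma klinI:
  assumes "\<And>a. a \<in> V \<Longrightarrow> f a \<in> W" "\<And>a b. a \<in> V \<Longrightarrow> b \<in> V \<Longrightarrow> f (a + b) = f a + f b"
    "\<And>c a. a \<in> V \<Longrightarrow> f (s1 c a) = s2 c (f a)"
  shows "klin s1 s2 V W f"
  using assms unfolding klin_def by blast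

definition f1 :: "('k::field, 'm::ab_group_add) rmod \<Rightarrow> 'm \<Rightarrow> 'm" where
  "f1 M m = m - yo M (xo M m)"

definition x_nilpotent :: "('k::field, 'm::ab_group_add) rmod \<Rightarrow> 'm set" where
  "x_nilpotent M = {m \<in> car M. \<exists>N. (xo M ^^ N) m = 0}"

locale rmodule =
  fixes M :: "('k::field, 'm::ab_group_add) rmod"
  assumes is_rmod: "is_rmod M"
begin

lemma kspace: "kspace (sc M) (car M)"
  using is_rmod unfolding is_rmod_def by blast

lemma add_subgroup: "add_subgroup (car M)"
  using kspace_add_subgroup[OF kspace] .

lemma x_klin: "klin (sc M) (sc M) (car M) (car M) (xo M)"
  and y_klin: "klin (sc M) (sc M) (car M) (car M) (yo M)"
  and x_y: "m \<in> car M \<Longrightarrow> xo M (yo M m) = m"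
  using is_rmod unfolding is_rmod_def by blast+

lemma x_closed: "m \<in> car M \<Longrightarrow> xo M m \<in> car M"
  and y_closed: "m \<in> car M \<Longrightarrow> yo M m \<in> car M"
  and x_scale: "m \<in> car M \<Longrightarrow> xo M (sc M c m) = sc M c (xo M m)"
  and y_scale: "m \<in> car M \<Longrightarrow> yo M (sc M c m) = sc M c (yo M m)"
  and x_additive: "additive_on (car M) (xo M)"
  and y_additive: "additive_on (car M) (yo M)"
  using klin_closed[OF x_klin] klin_closed[OF y_klin] klin_scale[OF x_klin] klin_scale[OF y_klin]
    klin_additive_on[OF x_klin] klin_additive_on[OF y_klin] by blast+

lemma zero_closed: "0 \<in> car M"
  and add_closed: "a \<in> car M \<Longrightarrow> b \<in> car M \<Longrightarrow> a + b \<in> car M"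
  and diff_closed: "a \<in> car M \<Longrightarrow> b \<in> car M \<Longrightarrow> a - b \<in> car M"
  and scale_closed: "a \<in> car M \<Longrightarrow> sc M c a \<in> car M"
  using add_subgroup_zero add_subgroup_add add_subgroup_diff add_subgroup kspace_scale[OF kspace]
  by blast+

lemma x_zero: "xo M 0 = 0"
  and y_zero: "yo M 0 = 0"
  using additive_on_zero[OF add_subgroup] x_additive y_additive by blast+

lemma xpow_closed: "m \<in> car M \<Longrightarrow> (xo M ^^ n) m \<in> car M"
  and ypow_closed: "m \<in> car M \<Longrightarrow> (yo M ^^ n) m \<in> car M"
  by (induction n) (simp_all add: x_closed y_closed)

lemma xpow_additive: "additive_on (car M) (xo M ^^ n)"
  and ypow_additive: "additive_on (car M) (yo M ^^ n)"
  using additive_on_funpow x_additive y_additive x_closed y_closed by blast+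

lemma xpow_zero: "(xo M ^^ n) 0 = 0"
  and ypow_zero: "(yo M ^^ n) 0 = 0"
  by (induction n) (simp_all add: x_zero y_zero)

lemma ypow_scale: "m \<in> car M \<Longrightarrow> (yo M ^^ n) (sc M c m) = sc M c ((yo M ^^ n) m)"
  by (induction n) (simp_all add: y_scale ypow_closed)

lemma xpow_ypow:
  assumes "w \<in> car M"
  shows "(xo M ^^ b) ((yo M ^^ (b + c)) w) = (yo M ^^ c) w"
proof (induction b)
  case (Suc b)
  have "(xo M ^^ Suc b) ((yo M ^^ (Suc b + c)) w) = (xo M ^^ b) (xo M (yo M ((yo M ^^ (b + c)) w)))"
    by (simp add: funpow_swap1)
  with Suc show ?case by (simp add: x_y ypow_closed assms)
qed simp

lemma f1_closed: "m \<in> car M \<Longrightarrow> f1 M m \<in> car M"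
  unfolding f1_def by (simp add: diff_closed x_closed y_closed)

lemma x_f1: "m \<in> car M \<Longrightarrow> xo M (f1 M m) = 0"
  unfolding f1_def by (simp add: additive_on_diff[OF add_subgroup x_additive] x_closed y_closed x_y)

lemma f1_additive: "additive_on (car M) (f1 M)"
  unfolding additive_on_def
proof (intro ballI)
  fix a b assume ab: "a \<in> car M" "b \<in> car M"
  have "yo M (xo M (a + b)) = yo M (xo M a) + yo M (xo M b)"
    using additive_on_add[OF add_subgroup x_additive ab]
      additive_on_add[OF add_subgroup y_additive x_closed[OF ab(1)] x_closed[OF ab(2)]] by simp
  then show "f1 M (a + b) = f1 M a + f1 M b" unfolding f1_def by simp
qed

lemma f1_zero: "f1 M 0 = 0"
  unfolding f1_def by (simp add: x_zero y_zero)

lemma f1_telescope: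
  assumes "m \<in> car M"
  shows "m = (\<Sum>a<K. (yo M ^^ a) (f1 M ((xo M ^^ a) m))) + (yo M ^^ K) ((xo M ^^ K) m)"
proof (induction K)
  case (Suc K)
  let ?z = "(xo M ^^ K) m"
  have z: "?z \<in> car M" using xpow_closed[OF assms] .
  have "(yo M ^^ K) ?z = (yo M ^^ K) (f1 M ?z + yo M (xo M ?z))"
    unfolding f1_def by simp
  also have "\<dots> = (yo M ^^ K) (f1 M ?z) + (yo M ^^ Suc K) ((xo M ^^ Suc K) m)"
    using additive_on_add[OF add_subgroup ypow_additive f1_closed[OF z] y_closed[OF x_closed[OF z]]]
    by (simp add: funpow_swap1)
  finally show ?case using Suc by (simp add: add.assoc)
qed simp

lemma f1_xpow_ypow:
  assumes "w \<in> car M" "xo M w = 0"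
  shows "f1 M ((xo M ^^ b) ((yo M ^^ a) w)) = (if a = b then w else 0)"
proof (cases "b \<le> a")
  case True
  then obtain c where a: "a = b + c" using le_Suc_ex by blast
  then have xy: "(xo M ^^ b) ((yo M ^^ a) w) = (yo M ^^ c) w"
    using xpow_ypow[OF assms(1)] by simp
  show ?thesis
  proof (cases c)
    case 0
    then show ?thesis unfolding xy f1_def using a assms(2) y_zero by simp
  next
    case (Suc k)
    have "f1 M (yo M ((yo M ^^ k) w)) = 0"
      unfolding f1_def using x_y[OF ypow_closed[OF assms(1)]] by simp
    then show ?thesis unfolding xy using Suc a by simp
  qed
next
  case False
  then obtain c where b: "b = Suc c + a"
    using less_imp_Suc_add[of a b] by auto
  have "(xo M ^^ b) ((yo M ^^ a) w) = (xo M ^^ c) (xo M w)"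
    unfolding b funpow_add comp_apply using xpow_ypow[OF assms(1), of a 0]
    by (simp only: add_0_right funpow_0 funpow_Suc_right comp_apply)
  then show ?thesis using False assms(2) xpow_zero f1_zero b by simp
qed

lemma x_nilpotent_add_subgroup: "add_subgroup (x_nilpotent M)"
  unfolding add_subgroup_def
proof (intro conjI ballI)
  show "0 \<in> x_nilpotent M" unfolding x_nilpotent_def using zero_closed xpow_zero by blast
  fix a b assume a: "a \<in> x_nilpotent M" and b: "b \<in> x_nilpotent M"
  then obtain Na Nb where ac: "a \<in> car M" "(xo M ^^ Na) a = 0"
    and bc: "b \<in> car M" "(xo M ^^ Nb) b = 0"
    unfolding x_nilpotent_def by blast
  have "(xo M ^^ (Nb + Na)) a = 0" "(xo M ^^ (Na + Nb)) b = 0"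
    using ac(2) bc(2) by (simp_all add: funpow_add xpow_zero)
  then have "(xo M ^^ (Na + Nb)) (a + b) = 0"
    using additive_on_add[OF add_subgroup xpow_additive ac(1) bc(1)] by (simp add: add.commute)
  then show "a + b \<in> x_nilpotent M"
    unfolding x_nilpotent_def using add_closed[OF ac(1) bc(1)] by blast
  have "(xo M ^^ Na) (- a) = 0"
    using additive_on_uminus[OF add_subgroup xpow_additive ac(1)] ac(2) by simp
  then show "- a \<in> x_nilpotent M"
    unfolding x_nilpotent_def using add_subgroup_uminus[OF add_subgroup ac(1)] by blast
qed

lemma x_nilpotent_y:
  assumes "n \<in> x_nilpotent M"
  shows "yo M n \<in> x_nilpotent M"
proof -
  obtain N where n: "n \<in> car M" "(xo M ^^ N) n = 0"
    using assms unfolding x_nilpotent_def by blast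
  then have "(xo M ^^ Suc N) (yo M n) = 0"
    by (simp add: funpow_swap1 x_y)
  then show ?thesis unfolding x_nilpotent_def using y_closed[OF n(1)] by blast
qed

lemma x_nilpotent_scale: "n \<in> x_nilpotent M \<Longrightarrow> sc M c n \<in> x_nilpotent M"
proof -
  have xpow_scale: "(xo M ^^ k) (sc M c m) = sc M c ((xo M ^^ k) m)" if "m \<in> car M" for k m
    using that by (induction k) (simp_all add: x_scale xpow_closed)
  assume "n \<in> x_nilpotent M"
  then obtain N where n: "n \<in> car M" "(xo M ^^ N) n = 0"
    unfolding x_nilpotent_def by blast
  then have "(xo M ^^ N) (sc M c n) = 0"
    using xpow_scale kspace_scale_zero[OF kspace] by simp
  then show "sc M c n \<in> x_nilpotent M"
    unfolding x_nilpotent_def using scale_closed[OF n(1)] by blast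
qed

lemma IM_eq_x_nilpotent: "IM M = x_nilpotent M"
proof
  have "subsp (sc M) (x_nilpotent M) (car M)"
    using x_nilpotent_add_subgroup x_nilpotent_scale unfolding subsp_def add_subgroup_def
    by (auto simp: x_nilpotent_def)
  moreover have "xo M n \<in> x_nilpotent M" if nil: "n \<in> x_nilpotent M" for n
  proof -
    obtain N where n: "n \<in> car M" "(xo M ^^ N) n = 0"
      using nil unfolding x_nilpotent_def by blast
    then have "(xo M ^^ N) (xo M n) = 0"
      by (simp add: funpow_swap1[symmetric] x_zero)
    then show ?thesis unfolding x_nilpotent_def using x_closed[OF n(1)] by blast
  qed
  moreover have "(\<lambda>m. m - yo M (xo M m)) ` car M \<subseteq> x_nilpotent M"
    unfolding f1_def[symmetric] x_nilpotent_def using f1_closed x_f1 by (auto intro!: exI[of _ 1])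
  ultimately show "IM M \<subseteq> x_nilpotent M"
    unfolding IM_def using x_nilpotent_y by (intro Inter_lower) auto
next
  show "x_nilpotent M \<subseteq> IM M"
    unfolding IM_def
  proof (intro subsetI InterI)
    fix n N assume n: "n \<in> x_nilpotent M"
      and N: "N \<in> {N. subsp (sc M) N (car M) \<and> xo M ` N \<subseteq> N \<and> yo M ` N \<subseteq> N
                  \<and> (\<lambda>m. m - yo M (xo M m)) ` car M \<subseteq> N}"
    obtain K where K: "n \<in> car M" "(xo M ^^ K) n = 0"
      using n unfolding x_nilpotent_def by blast
    have ypow: "(yo M ^^ a) w \<in> N" if "w \<in> N" for w a
      using N that by (induction a) auto
    have "(yo M ^^ a) (f1 M ((xo M ^^ a) n)) \<in> N" for a
      using N xpow_closed[OF K(1)] by (intro ypow) (auto simp: f1_def)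
    then have "(\<Sum>a<K. (yo M ^^ a) (f1 M ((xo M ^^ a) n))) \<in> N"
      using N unfolding subsp_def by (intro sum_closed) auto
    then show "n \<in> N"
      using f1_telescope[OF K(1), of K] K(2) by (simp add: ypow_zero)
  qed
qed

lemma IM_add_subgroup: "add_subgroup (IM M)"
  using x_nilpotent_add_subgroup unfolding IM_eq_x_nilpotent .

lemma IM_subset: "IM M \<subseteq> car M"
  unfolding IM_eq_x_nilpotent x_nilpotent_def by blast

end

lemma
  assumes "rlin M N f"
  shows rlin_closed: "m \<in> car M \<Longrightarrow> f m \<in> car N"
    and rlin_add: "a \<in> car M \<Longrightarrow> b \<in> car M \<Longrightarrow> f (a + b) = f a + f b"
    and rlin_scale: "m \<in> car M \<Longrightarrow> f (sc M c m) = sc N c (f m)"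
    and rlin_x: "m \<in> car M \<Longrightarrow> f (xo M m) = xo N (f m)"
    and rlin_y: "m \<in> car M \<Longrightarrow> f (yo M m) = yo N (f m)"
    and rlin_additive: "additive_on (car M) f"
  using assms unfolding rlin_def klin_def additive_on_def by blast+

context rmodule
begin

lemma rlin_zero: "rlin M N f \<Longrightarrow> f 0 = 0"
  using additive_on_zero[OF add_subgroup rlin_additive] .

lemma rlin_xpow: "rlin M N f \<Longrightarrow> m \<in> car M \<Longrightarrow> f ((xo M ^^ n) m) = (xo N ^^ n) (f m)"
  and rlin_ypow: "rlin M N f \<Longrightarrow> m \<in> car M \<Longrightarrow> f ((yo M ^^ n) m) = (yo N ^^ n) (f m)"
  by (induction n) (simp_all add: rlin_x rlin_y xpow_closed ypow_closed)

lemma rlin_IM: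
  assumes "rmodule N" "rlin M N f" "n \<in> IM M"
  shows "f n \<in> IM N"
proof -
  obtain K where K: "n \<in> car M" "(xo M ^^ K) n = 0"
    using assms(3) unfolding IM_eq_x_nilpotent x_nilpotent_def by blast
  then have "(xo N ^^ K) (f n) = 0"
    using rlin_xpow[OF assms(2) K(1), of K, symmetric] rlin_zero[OF assms(2)] by simp
  then show ?thesis
    using rlin_closed[OF assms(2) K(1)]
    unfolding rmodule.IM_eq_x_nilpotent[OF assms(1)] x_nilpotent_def by blast
qed

lemma rlin_inverse:
  assumes f: "rlin M N f" and g: "\<And>b. b \<in> car N \<Longrightarrow> g b \<in> car M"
    and gf: "\<And>a. a \<in> car M \<Longrightarrow> g (f a) = a" and fg: "\<And>b. b \<in> car N \<Longrightarrow> f (g b) = b"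
  shows "rlin N M g"
proof -
  have transfer: "g (h b) = k (g b)"
    if "\<And>a. a \<in> car M \<Longrightarrow> f (k a) = h (f a)" "\<And>a. a \<in> car M \<Longrightarrow> k a \<in> car M" "b \<in> car N"
    for h k b
    using that(1)[OF g[OF that(3)]] gf[OF that(2)[OF g[OF that(3)]]] fg[OF that(3)] by simp
  show ?thesis
    unfolding rlin_def klin_def
  proof (intro conjI ballI allI subsetI)
    show "g (a + b) = g a + g b" if "a \<in> car N" "b \<in> car N" for a b
    proof -
      have "g (a + b) = g (f (g a + g b))"
        using rlin_add[OF f g g] fg that by simp
      then show ?thesis using gf add_closed g that by simp
    qed
    show "g (sc N c b) = sc M c (g b)" if "b \<in> car N" for c b
      by (rule transfer[where h = "sc N c" and k = "sc M c"]) (simp_all add: rlin_scale[OF f] scale_closed that)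
    show "g (xo N b) = xo M (g b)" if "b \<in> car N" for b
      by (rule transfer[where h = "xo N" and k = "xo M"]) (simp_all add: rlin_x[OF f] x_closed that)
    show "g (yo N b) = yo M (g b)" if "b \<in> car N" for b
      by (rule transfer[where h = "yo N" and k = "yo M"]) (simp_all add: rlin_y[OF f] y_closed that)
  qed (use g in blast)
qed

lemma kernel_x_kspace: "kspace (sc M) {m \<in> car M. xo M m = 0}"
proof (rule kspace_subspace[OF kspace])
  show "add_subgroup {m \<in> car M. xo M m = 0}"
    unfolding add_subgroup_def
    using zero_closed add_closed add_subgroup_uminus[OF add_subgroup] x_zero
      additive_on_add[OF add_subgroup x_additive] additive_on_uminus[OF add_subgroup x_additive]
    by auto
  show "sc M c a \<in> {m \<in> car M. xo M m = 0}" if "a \<in> {m \<in> car M. xo M m = 0}" for c a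
    using that scale_closed x_scale kspace_scale_zero[OF kspace] by simp
qed blast

end

section \<open>Weak splitting pairs and the functor \<open>\<Xi>\<close>\<close>

definition proj :: "('k::field, 'm::ab_group_add) rmod \<Rightarrow> ('m set \<Rightarrow> 'm) \<Rightarrow> 'm \<Rightarrow> 'm" where
  "proj M \<alpha> m = \<alpha> (cos (IM M) m)"

lemma cos_eq:
  assumes "add_subgroup N" "m - m' \<in> N"
  shows "cos N m = cos N m'"
proof -
  have "cos N m \<subseteq> cos N m'" if "m - m' \<in> N" for m m'
  proof
    fix z assume "z \<in> cos N m"
    then obtain n where "n \<in> N" "z = m + n" unfolding cos_def by blast
    then have "m - m' + n \<in> N" "z = m' + (m - m' + n)"
      using add_subgroup_add[OF assms(1) that] by simp_all
    then show "z \<in> cos N m'" unfolding cos_def by blast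
  qed
  moreover have "m' - m \<in> N"
    using add_subgroup_uminus[OF assms] by simp
  ultimately show ?thesis using assms(2) by blast
qed

lemma Xi_simps:
  "Mu (Xi (M, \<alpha>)) = {m \<in> car M. xo M m = 0}" "Mv (Xi (M, \<alpha>)) = imal M \<alpha>"
  "scu (Xi (M, \<alpha>)) = sc M" "scv (Xi (M, \<alpha>)) = sc M" "pf (Xi (M, \<alpha>)) = xo M"
  "pe (Xi (M, \<alpha>)) = (\<lambda>m. THE m1. m1 \<in> IM M \<and> yo M m - m1 \<in> imal M \<alpha>)"
  unfolding Xi_def by simp_all

locale weak_splitting =
  fixes M :: "('k::field, 'm::ab_group_add) rmod" and \<alpha> :: "'m set \<Rightarrow> 'm"
  assumes wsp: "wsp M \<alpha>"
begin

sublocale rmodule M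
  using wsp unfolding wsp_def by unfold_locales blast

lemma proj_closed: "m \<in> car M \<Longrightarrow> proj M \<alpha> m \<in> car M"
  and proj_diff_IM: "m \<in> car M \<Longrightarrow> proj M \<alpha> m - m \<in> IM M"
  and proj_add: "a \<in> car M \<Longrightarrow> b \<in> car M \<Longrightarrow> proj M \<alpha> (a + b) = proj M \<alpha> a + proj M \<alpha> b"
  and proj_scale: "m \<in> car M \<Longrightarrow> proj M \<alpha> (sc M c m) = sc M c (proj M \<alpha> m)"
  and proj_x: "m \<in> car M \<Longrightarrow> proj M \<alpha> (xo M m) = xo M (proj M \<alpha> m)"
  using wsp unfolding wsp_def proj_def by blast+

lemma proj_additive: "additive_on (car M) (proj M \<alpha>)"
  unfolding additive_on_def using proj_add by blast

lemma proj_zero: "proj M \<alpha> 0 = 0"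
  using additive_on_zero[OF add_subgroup proj_additive] .

lemma proj_cong: "m - m' \<in> IM M \<Longrightarrow> proj M \<alpha> m = proj M \<alpha> m'"
  unfolding proj_def using cos_eq[OF IM_add_subgroup] by simp

lemma proj_proj: "m \<in> car M \<Longrightarrow> proj M \<alpha> (proj M \<alpha> m) = proj M \<alpha> m"
  using proj_cong proj_diff_IM by blast

lemma proj_IM: "n \<in> IM M \<Longrightarrow> proj M \<alpha> n = 0"
  using proj_cong[of n 0] proj_zero by simp

lemma imal_eq: "imal M \<alpha> = proj M \<alpha> ` car M"
  unfolding imal_def quot_def proj_def by (simp add: image_comp comp_def)

lemma imal_subset: "imal M \<alpha> \<subseteq> car M"
  unfolding imal_eq using proj_closed by blast

lemma imal_closed: "w \<in> imal M \<alpha> \<Longrightarrow> w \<in> car M"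
  using imal_subset by blast

lemma proj_imal: "w \<in> imal M \<alpha> \<Longrightarrow> proj M \<alpha> w = w"
  unfolding imal_eq using proj_proj by blast

lemma imal_IM_zero: "w \<in> imal M \<alpha> \<Longrightarrow> w \<in> IM M \<Longrightarrow> w = 0"
  using proj_imal proj_IM by force

lemma IM_component_unique:
  assumes "m \<in> car M" "m1 \<in> IM M" "m - m1 \<in> imal M \<alpha>"
  shows "m1 = m - proj M \<alpha> m"
proof -
  have "m - m1 = proj M \<alpha> m - proj M \<alpha> m1"
    using proj_imal[OF assms(3)] additive_on_diff[OF add_subgroup proj_additive assms(1)]
      IM_subset assms(2) by auto
  then show ?thesis using proj_IM[OF assms(2)] by (simp add: algebra_simps)
qed

lemma IM_component: "m \<in> car M \<Longrightarrow> m - proj M \<alpha> m \<in> IM M"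
  using add_subgroup_uminus[OF IM_add_subgroup proj_diff_IM] by simp

lemma pe_Xi: "m \<in> car M \<Longrightarrow> pe (Xi (M, \<alpha>)) m = yo M m - proj M \<alpha> (yo M m)"
  unfolding Xi_simps
  by (rule the_equality) (auto simp: imal_eq IM_component IM_component_unique y_closed)

lemma imal_kspace: "kspace (sc M) (imal M \<alpha>)"
proof (rule kspace_subspace[OF kspace imal_subset])
  have "proj M \<alpha> a + proj M \<alpha> b \<in> imal M \<alpha>" "- proj M \<alpha> a \<in> imal M \<alpha>"
    "sc M c (proj M \<alpha> a) \<in> imal M \<alpha>"
    if "a \<in> car M" "b \<in> car M" for a b c
    using that proj_add[symmetric] additive_on_uminus[OF add_subgroup proj_additive, symmetric]
      proj_scale[symmetric] add_closed add_subgroup_uminus[OF add_subgroup] scale_closed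
    unfolding imal_eq by auto
  moreover have "0 \<in> imal M \<alpha>"
    unfolding imal_eq using zero_closed proj_zero by force
  ultimately show "add_subgroup (imal M \<alpha>)" "\<And>c w. w \<in> imal M \<alpha> \<Longrightarrow> sc M c w \<in> imal M \<alpha>"
    unfolding add_subgroup_def by (auto simp: imal_eq)
qed

lemma imal_x: "w \<in> imal M \<alpha> \<Longrightarrow> xo M w \<in> imal M \<alpha>"
  unfolding imal_eq using proj_x x_closed by (auto intro!: image_eqI[where x = "xo M _"])

lemma pe_Xi_kernel_x:
  assumes "w \<in> imal M \<alpha>"
  shows "pe (Xi (M, \<alpha>)) w \<in> {m \<in> car M. xo M m = 0}"
proof -
  have w: "w \<in> car M" using imal_closed[OF assms] .
  have "xo M (pe (Xi (M, \<alpha>)) w) = w - proj M \<alpha> w"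
    using pe_Xi[OF w] additive_on_diff[OF add_subgroup x_additive y_closed[OF w] proj_closed[OF y_closed[OF w]]]
      proj_x[OF y_closed[OF w], symmetric] x_y[OF w] by simp
  then show ?thesis
    using pe_Xi[OF w] proj_imal[OF assms] diff_closed y_closed proj_closed w by simp
qed

lemma klin_pe_Xi: "klin (sc M) (sc M) (imal M \<alpha>) {m \<in> car M. xo M m = 0} (pe (Xi (M, \<alpha>)))"
proof (rule klinI)
  fix a b c assume a: "a \<in> imal M \<alpha>" and b: "b \<in> imal M \<alpha>"
  have ab: "a \<in> car M" "b \<in> car M" using a b imal_subset by blast+
  show "pe (Xi (M, \<alpha>)) a \<in> {m \<in> car M. xo M m = 0}" by (rule pe_Xi_kernel_x[OF a])
  show "pe (Xi (M, \<alpha>)) (a + b) = pe (Xi (M, \<alpha>)) a + pe (Xi (M, \<alpha>)) b"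
    using pe_Xi ab add_closed[OF ab] additive_on_add[OF add_subgroup y_additive ab]
      proj_add[OF y_closed y_closed] by simp
  show "pe (Xi (M, \<alpha>)) (sc M c a) = sc M c (pe (Xi (M, \<alpha>)) a)"
    using pe_Xi ab scale_closed y_scale proj_scale y_closed proj_closed
      kspace_scale_diff[OF kspace] by simp
qed

lemma klin_x_imal: "klin (sc M) (sc M) (imal M \<alpha>) (imal M \<alpha>) (xo M)"
  using imal_x klin_add[OF x_klin] klin_scale[OF x_klin] imal_subset by (intro klinI) blast+

lemma bij_x_imal: "bij_betw (xo M) (imal M \<alpha>) (imal M \<alpha>)"
proof (rule bij_betw_imageI)
  show "inj_on (xo M) (imal M \<alpha>)"
  proof (rule inj_onI)
    fix a b assume a: "a \<in> imal M \<alpha>" and b: "b \<in> imal M \<alpha>" and "xo M a = xo M b"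
    then have "(xo M ^^ 1) (a - b) = 0"
      using additive_on_diff[OF add_subgroup x_additive imal_closed[OF a] imal_closed[OF b]] by simp
    then have "a - b \<in> IM M"
      unfolding IM_eq_x_nilpotent x_nilpotent_def using diff_closed imal_closed a b by blast
    moreover have "a - b \<in> imal M \<alpha>"
      using a b kspace_add[OF imal_kspace] kspace_uminus[OF imal_kspace] by (metis diff_conv_add_uminus)
    ultimately have "a - b = 0" by (rule imal_IM_zero[rotated])
    then show "a = b" by simp
  qed
  have "w = xo M (proj M \<alpha> (yo M w))" if "w \<in> imal M \<alpha>" for w
    using that proj_x[OF y_closed] x_y proj_imal imal_closed by auto
  moreover have "proj M \<alpha> (yo M w) \<in> imal M \<alpha>" if "w \<in> imal M \<alpha>" for w
    using that imal_subset y_closed unfolding imal_eq by blast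
  ultimately show "xo M ` imal M \<alpha> = imal M \<alpha>"
    using imal_x by blast
qed

lemma drep_Xi: "drep (Xi (M, \<alpha>))"
  unfolding drep_def Xi_simps(1-5)
  using kernel_x_kspace imal_kspace klin_pe_Xi klin_x_imal bij_x_imal by blast

end

lemma rlin_pe_Xi:
  assumes "weak_splitting M \<alpha>" "weak_splitting N \<beta>" "cmor (M, \<alpha>) (N, \<beta>) f" "v \<in> imal M \<alpha>"
  shows "f (pe (Xi (M, \<alpha>)) v) = pe (Xi (N, \<beta>)) (f v)"
proof -
  interpret M: weak_splitting M \<alpha> by fact
  interpret N: weak_splitting N \<beta> by fact
  have f: "rlin M N f" and im: "f ` imal M \<alpha> \<subseteq> imal N \<beta>"
    using assms(3) unfolding cmor_def by simp_all
  have v: "v \<in> car M" and fv: "f v \<in> car N"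
    using assms(4) M.imal_subset rlin_closed[OF f] by blast+
  have yv: "yo M v \<in> car M" using M.y_closed[OF v] .
  have pe: "f (pe (Xi (M, \<alpha>)) v) = yo N (f v) - f (proj M \<alpha> (yo M v))"
    using M.pe_Xi[OF v] additive_on_diff[OF M.add_subgroup rlin_additive[OF f] yv M.proj_closed[OF yv]]
      rlin_y[OF f v] by simp
  have "f (pe (Xi (M, \<alpha>)) v) \<in> IM N"
    using M.rlin_IM[OF N.rmodule_axioms f] M.pe_Xi[OF v] M.IM_component[OF yv] by simp
  moreover have "yo N (f v) - f (pe (Xi (M, \<alpha>)) v) \<in> imal N \<beta>"
    using pe im yv unfolding M.imal_eq by auto
  ultimately show ?thesis
    using N.IM_component_unique[OF N.y_closed[OF fv]] N.pe_Xi[OF fv] by simp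
qed

lemma dmor_Xi:
  assumes "weak_splitting M \<alpha>" "weak_splitting N \<beta>" "cmor (M, \<alpha>) (N, \<beta>) f"
  shows "dmor (Xi (M, \<alpha>)) (Xi (N, \<beta>)) (f, f)"
proof -
  interpret M: weak_splitting M \<alpha> by fact
  have f: "rlin M N f" and im: "f ` imal M \<alpha> \<subseteq> imal N \<beta>"
    using assms(3) unfolding cmor_def by simp_all
  have "klin (sc M) (sc N) {m \<in> car M. xo M m = 0} {m \<in> car N. xo N m = 0} f"
    by (rule klinI) (auto simp: rlin_closed[OF f] rlin_x[OF f, symmetric] M.rlin_zero[OF f]
        rlin_add[OF f] rlin_scale[OF f])
  moreover have "klin (sc M) (sc N) (imal M \<alpha>) (imal N \<beta>) f"
    using im M.imal_closed rlin_add[OF f] rlin_scale[OF f] by (intro klinI) auto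
  ultimately show ?thesis
    unfolding dmor_def Xi_simps(1-5)
    using rlin_pe_Xi[OF assms] rlin_x[OF f] M.imal_subset by auto
qed

section \<open>The functor \<open>\<Psi>\<close>\<close>

definition fsupp :: "'u::zero set \<Rightarrow> (nat \<Rightarrow> 'u) set" where
  "fsupp U = {g. (\<forall>a. g a \<in> U) \<and> finite {a. g a \<noteq> 0}}"

lemma fsupp_bound:
  assumes "g \<in> fsupp U"
  obtains N where "\<And>a. N \<le> a \<Longrightarrow> g a = 0"
proof -
  obtain N where N: "\<forall>a\<in>{a. g a \<noteq> 0}. a < N"
    using assms unfolding fsupp_def finite_nat_set_iff_bounded by blast
  show thesis by (rule that[of N]) (use N in force)
qed

lemma support_subset_lessThan:
  fixes g :: "nat \<Rightarrow> 'a::zero"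
  assumes "\<And>a. N \<le> a \<Longrightarrow> g a = 0"
  shows "{a. g a \<noteq> 0} \<subseteq> {..<N}"
proof
  fix a assume "a \<in> {a. g a \<noteq> 0}"
  then have "\<not> N \<le> a" using assms by auto
  then show "a \<in> {..<N}" by simp
qed

lemma fsupp_closed: "g \<in> fsupp U \<Longrightarrow> g a \<in> U"
  unfolding fsupp_def by blast

lemma fsupp_map:
  "g \<in> fsupp U \<Longrightarrow> (\<And>u. u \<in> U \<Longrightarrow> h u \<in> W) \<Longrightarrow> h 0 = 0 \<Longrightarrow> h \<circ> g \<in> fsupp W"
  unfolding fsupp_def by (auto elim!: finite_subset[rotated])

lemma fsupp_shift: "g \<in> fsupp U \<Longrightarrow> (\<lambda>a. g (Suc a)) \<in> fsupp U"
  unfolding fsupp_def using finite_vimageI[OF _ inj_Suc, of "{a. g a \<noteq> 0}"]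
  by (simp add: vimage_def)

lemma fsupp_unshift:
  assumes "g \<in> fsupp U" "u \<in> U"
  shows "(\<lambda>a. if a = 0 then u else g (a - 1)) \<in> fsupp U"
proof -
  have "{a. (if a = 0 then u else g (a - 1)) \<noteq> 0} \<subseteq> insert 0 (Suc ` {a. g a \<noteq> 0})"
  proof
    fix a assume "a \<in> {a. (if a = 0 then u else g (a - 1)) \<noteq> 0}"
    then show "a \<in> insert 0 (Suc ` {a. g a \<noteq> 0})" by (cases a) auto
  qed
  moreover have "finite (insert 0 (Suc ` {a. g a \<noteq> 0}))"
    using assms(1) unfolding fsupp_def by simp
  ultimately have "finite {a. (if a = 0 then u else g (a - 1)) \<noteq> 0}"
    by (rule finite_subset)
  then show ?thesis using assms unfolding fsupp_def by simp
qed

lemma kspace_fsupp: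
  assumes "kspace s U"
  shows "kspace (\<lambda>c g a. s c (g a)) (fsupp U)"
proof -
  have "g + h \<in> fsupp U" if "g \<in> fsupp U" "h \<in> fsupp U" for g h
  proof -
    have "{a. g a + h a \<noteq> 0} \<subseteq> {a. g a \<noteq> 0} \<union> {a. h a \<noteq> 0}" by auto
    then show ?thesis
      using that kspace_add[OF assms] unfolding fsupp_def by (auto elim: finite_subset)
  qed
  moreover have "(\<lambda>a. s c (g a)) \<in> fsupp U" if "g \<in> fsupp U" for c g
    using fsupp_map[OF that, of "s c"] kspace_scale[OF assms] kspace_scale_zero[OF assms]
    by (simp add: comp_def)
  moreover have "- g \<in> fsupp U" if "g \<in> fsupp U" for g
    using fsupp_map[OF that, of uminus] kspace_uminus[OF assms] by (simp add: comp_def fun_Compl_def)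
  moreover have "0 \<in> fsupp U"
    using kspace_zero[OF assms] unfolding fsupp_def by simp
  moreover have "\<forall>a\<in>U. \<forall>b\<in>U. s c (a + b) = s c a + s c b" "\<forall>a\<in>U. s (c + d) a = s c a + s d a"
    "\<forall>a\<in>U. s c (s d a) = s (c * d) a" "\<forall>a\<in>U. s 1 a = a" for c d
    using assms unfolding kspace_def by blast+
  ultimately show ?thesis
    unfolding kspace_def by (simp add: fun_eq_iff fsupp_closed)
qed

lemma Psi_mod_simps:
  "car (Psi_mod r) = fsupp (Mu r) \<times> Mv r"
  "sc (Psi_mod r) = (\<lambda>c (g, v). (\<lambda>a. scu r c (g a), scv r c v))"
  "xo (Psi_mod r) (g, v) = (\<lambda>a. g (Suc a), pf r v)"
  "yo (Psi_mod r) (g, v) = (\<lambda>a. if a = 0 then pe r v else g (a - 1), the_inv_into (Mv r) (pf r) v)"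
  unfolding Psi_mod_def fsupp_def by auto

lemma xpow_Psi_mod: "(xo (Psi_mod r) ^^ N) (g, v) = (\<lambda>a. g (a + N), (pf r ^^ N) v)"
  by (induction N) (simp_all add: Psi_mod_simps)

lemma PsiM_Pair [simp]: "PsiM f (g, v) = (fst f \<circ> g, snd f v)"
  unfolding PsiM_def by simp

locale gamma_rep =
  fixes r :: "('k::field, 'u::ab_group_add, 'v::ab_group_add) rep"
  assumes drep: "drep r"
begin

lemma kspace_u: "kspace (scu r) (Mu r)"
  and kspace_v: "kspace (scv r) (Mv r)"
  and pe_klin: "klin (scv r) (scu r) (Mv r) (Mu r) (pe r)"
  and pf_klin: "klin (scv r) (scv r) (Mv r) (Mv r) (pf r)"
  and pf_bij: "bij_betw (pf r) (Mv r) (Mv r)"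
  using drep unfolding drep_def by blast+

lemma pe_closed: "v \<in> Mv r \<Longrightarrow> pe r v \<in> Mu r"
  and pf_closed: "v \<in> Mv r \<Longrightarrow> pf r v \<in> Mv r"
  and pf_zero: "pf r 0 = 0"
  using klin_closed[OF pe_klin] klin_closed[OF pf_klin]
    additive_on_zero[OF kspace_add_subgroup[OF kspace_v] klin_additive_on[OF pf_klin]] by blast+

abbreviation pf_inv :: "'v \<Rightarrow> 'v" where
  "pf_inv \<equiv> the_inv_into (Mv r) (pf r)"

lemma pf_inv_closed: "v \<in> Mv r \<Longrightarrow> pf_inv v \<in> Mv r"
  and pf_pf_inv: "v \<in> Mv r \<Longrightarrow> pf r (pf_inv v) = v"
  and pf_inv_pf: "v \<in> Mv r \<Longrightarrow> pf_inv (pf r v) = v"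
  using the_inv_into_into[OF bij_betw_imp_inj_on[OF pf_bij], of v "Mv r"]
    f_the_inv_into_f[OF bij_betw_imp_inj_on[OF pf_bij], of v]
    the_inv_into_f_f[OF bij_betw_imp_inj_on[OF pf_bij], of v]
    bij_betw_imp_surj_on[OF pf_bij] by simp_all

lemma pf_inv_add: "v \<in> Mv r \<Longrightarrow> w \<in> Mv r \<Longrightarrow> pf_inv (v + w) = pf_inv v + pf_inv w"
  and pf_inv_scale: "v \<in> Mv r \<Longrightarrow> pf_inv (scv r c v) = scv r c (pf_inv v)"
  using pf_inv_pf[OF kspace_add[OF kspace_v pf_inv_closed pf_inv_closed]]
    pf_inv_pf[OF kspace_scale[OF kspace_v pf_inv_closed]]
    klin_add[OF pf_klin pf_inv_closed pf_inv_closed] klin_scale[OF pf_klin pf_inv_closed]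
  by (simp_all add: pf_pf_inv)

lemma pf_pow_zero: "(pf r ^^ N) 0 = 0"
  by (induction N) (simp_all add: pf_zero)

lemma pf_pow_eq_zero: "v \<in> Mv r \<Longrightarrow> (pf r ^^ N) v = 0 \<Longrightarrow> v = 0"
proof (induction N arbitrary: v)
  case (Suc N)
  then have "pf r v = pf r 0"
    using pf_closed pf_zero by (simp add: funpow_swap1)
  then show ?case
    using Suc.prems(1) bij_betw_imp_inj_on[OF pf_bij] kspace_zero[OF kspace_v] by (auto dest: inj_onD)
qed simp

lemma rmod_Psi: "is_rmod (Psi_mod r)"
proof -
  have x: "klin (sc (Psi_mod r)) (sc (Psi_mod r)) (car (Psi_mod r)) (car (Psi_mod r)) (xo (Psi_mod r))"
    by (rule klinI) (auto simp: Psi_mod_simps fsupp_shift pf_closed klin_add[OF pf_klin]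
        klin_scale[OF pf_klin] fun_eq_iff)
  have y: "klin (sc (Psi_mod r)) (sc (Psi_mod r)) (car (Psi_mod r)) (car (Psi_mod r)) (yo (Psi_mod r))"
    by (rule klinI) (auto simp: Psi_mod_simps fsupp_unshift pe_closed pf_inv_closed pf_inv_add
        pf_inv_scale klin_add[OF pe_klin] klin_scale[OF pe_klin] fun_eq_iff)
  have "kspace (sc (Psi_mod r)) (car (Psi_mod r))"
    using kspace_Times[OF kspace_fsupp[OF kspace_u] kspace_v] by (simp add: Psi_mod_simps)
  with x y show ?thesis
    unfolding is_rmod_def by (auto simp: Psi_mod_simps pf_pf_inv)
qed

sublocale Psi: rmodule "Psi_mod r"
  using rmod_Psi by unfold_locales

lemma IM_Psi_mod: "IM (Psi_mod r) = fsupp (Mu r) \<times> {0}"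
proof -
  have "(g, v) \<in> x_nilpotent (Psi_mod r) \<longleftrightarrow> g \<in> fsupp (Mu r) \<and> v = 0" for g v
  proof
    assume "(g, v) \<in> x_nilpotent (Psi_mod r)"
    then obtain N where "g \<in> fsupp (Mu r)" "v \<in> Mv r" "(xo (Psi_mod r) ^^ N) (g, v) = 0"
      unfolding x_nilpotent_def by (auto simp: Psi_mod_simps)
    moreover from this(3) have "(pf r ^^ N) v = 0"
      by (simp add: xpow_Psi_mod zero_prod_def)
    ultimately show "g \<in> fsupp (Mu r) \<and> v = 0" using pf_pow_eq_zero by blast
  next
    assume g: "g \<in> fsupp (Mu r) \<and> v = 0"
    then obtain N where "\<And>a. N \<le> a \<Longrightarrow> g a = 0" using fsupp_bound by blast
    then have "(xo (Psi_mod r) ^^ N) (g, v) = 0"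
      using g by (simp add: xpow_Psi_mod zero_prod_def fun_eq_iff pf_pow_zero)
    then show "(g, v) \<in> x_nilpotent (Psi_mod r)"
      using g kspace_zero[OF kspace_v] unfolding x_nilpotent_def by (auto simp: Psi_mod_simps)
  qed
  then show ?thesis unfolding Psi.IM_eq_x_nilpotent by auto
qed

lemma proj_Psi: "proj (Psi_mod r) Psi_alpha m = (0, snd m)"
proof -
  have "snd p = snd m" if "p \<in> cos (IM (Psi_mod r)) m" for p
    using that unfolding cos_def IM_Psi_mod by auto
  moreover have "m \<in> cos (IM (Psi_mod r)) m"
    unfolding cos_def using Psi.IM_add_subgroup add_subgroup_zero by force
  ultimately show ?thesis
    unfolding proj_def Psi_alpha_def by (metis someI)
qed

lemma wsp_Psi: "wsp (Psi_mod r) Psi_alpha"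
  unfolding wsp_def proj_def[symmetric] proj_Psi
proof (intro conjI ballI allI rmod_Psi)
  fix m assume "m \<in> car (Psi_mod r)"
  then obtain g v where m: "m = (g, v)" "g \<in> fsupp (Mu r)" "v \<in> Mv r"
    by (auto simp: Psi_mod_simps)
  show "(0, snd m) \<in> car (Psi_mod r)"
    using m kspace_zero[OF kspace_fsupp[OF kspace_u]] by (simp add: Psi_mod_simps)
  show "(0, snd m) - m \<in> IM (Psi_mod r)"
    using m kspace_uminus[OF kspace_fsupp[OF kspace_u]] by (simp add: IM_Psi_mod)
  show "(0, snd (sc (Psi_mod r) c m)) = sc (Psi_mod r) c (0, snd m)" for c
    using m kspace_scale_zero[OF kspace_u] by (simp add: Psi_mod_simps zero_fun_def)
  show "(0, snd (xo (Psi_mod r) m)) = xo (Psi_mod r) (0, snd m)"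
    using m by (simp add: Psi_mod_simps zero_fun_def)
qed simp

sublocale Psi: weak_splitting "Psi_mod r" Psi_alpha
  using wsp_Psi by unfold_locales

lemma imal_Psi: "imal (Psi_mod r) Psi_alpha = (\<lambda>v. (0, v)) ` Mv r"
proof -
  have "(0, v) \<in> car (Psi_mod r)" if "v \<in> Mv r" for v
    using that kspace_zero[OF kspace_fsupp[OF kspace_u]] by (simp add: Psi_mod_simps)
  then show ?thesis
    unfolding Psi.imal_eq proj_Psi by (force simp: Psi_mod_simps)
qed

end

lemma
  assumes "dmor r s f"
  shows dmor_u_klin: "klin (scu r) (scu s) (Mu r) (Mu s) (fst f)"
    and dmor_v_klin: "klin (scv r) (scv s) (Mv r) (Mv s) (snd f)"
    and dmor_pe: "v \<in> Mv r \<Longrightarrow> fst f (pe r v) = pe s (snd f v)"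
    and dmor_pf: "v \<in> Mv r \<Longrightarrow> snd f (pf r v) = pf s (snd f v)"
  using assms unfolding dmor_def by blast+

lemma dmor_u_zero: "gamma_rep r \<Longrightarrow> dmor r s f \<Longrightarrow> fst f 0 = 0"
  and dmor_v_zero: "gamma_rep r \<Longrightarrow> dmor r s f \<Longrightarrow> snd f 0 = 0"
  using additive_on_zero[OF kspace_add_subgroup klin_additive_on[OF dmor_u_klin]]
    additive_on_zero[OF kspace_add_subgroup klin_additive_on[OF dmor_v_klin]]
    gamma_rep.kspace_u gamma_rep.kspace_v by blast+

lemma dmor_pf_inv:
  assumes "gamma_rep r" "gamma_rep s" "dmor r s f" "v \<in> Mv r"
  shows "snd f (the_inv_into (Mv r) (pf r) v) = the_inv_into (Mv s) (pf s) (snd f v)"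
proof -
  interpret r: gamma_rep r by fact
  interpret s: gamma_rep s by fact
  have "snd f v = pf s (snd f (r.pf_inv v))"
    using dmor_pf[OF assms(3) r.pf_inv_closed[OF assms(4)]] r.pf_pf_inv[OF assms(4)] by simp
  then show ?thesis
    using s.pf_inv_pf klin_closed[OF dmor_v_klin[OF assms(3)] r.pf_inv_closed[OF assms(4)]] by simp
qed

lemma cmor_PsiM:
  assumes "gamma_rep r" "gamma_rep s" "dmor r s f"
  shows "cmor (Psi r) (Psi s) (PsiM f)"
proof -
  interpret r: gamma_rep r by fact
  interpret s: gamma_rep s by fact
  note u = dmor_u_klin[OF assms(3)] and v = dmor_v_klin[OF assms(3)]
  have f0: "fst f 0 = 0" using dmor_u_zero[OF assms(1,3)] .
  have "klin (sc (Psi_mod r)) (sc (Psi_mod s)) (car (Psi_mod r)) (car (Psi_mod s)) (PsiM f)"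
    by (rule klinI)
       (auto simp: Psi_mod_simps fsupp_map klin_closed[OF u] klin_closed[OF v] f0 fun_eq_iff
         klin_add[OF v] klin_scale[OF v] klin_add[OF u] klin_scale[OF u] fsupp_closed
         kspace_add[OF kspace_fsupp[OF r.kspace_u]])
  moreover have "PsiM f (xo (Psi_mod r) p) = xo (Psi_mod s) (PsiM f p)"
    "PsiM f (yo (Psi_mod r) p) = yo (Psi_mod s) (PsiM f p)" if "p \<in> car (Psi_mod r)" for p
    using that dmor_pe[OF assms(3)] dmor_pf[OF assms(3)] dmor_pf_inv[OF assms]
    by (auto simp: Psi_mod_simps fun_eq_iff)
  moreover have "PsiM f ` imal (Psi_mod r) Psi_alpha \<subseteq> imal (Psi_mod s) Psi_alpha"
    using klin_closed[OF v] f0 unfolding r.imal_Psi s.imal_Psi by (auto simp: comp_def zero_fun_def)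
  ultimately show ?thesis
    unfolding cmor_def Psi_def rlin_def by simp
qed

section \<open>The unit \<open>\<rho> \<cong> \<Xi>(\<Psi>(\<rho>))\<close>\<close>

text \<open>\<open>(at0 u, 0)\<close> encodes \<open>f\<^sub>1 \<otimes> u\<close>.\<close>
definition at0 :: "'u::zero \<Rightarrow> nat \<Rightarrow> 'u" where
  "at0 u = (\<lambda>a. if a = 0 then u else 0)"

definition eta :: "('k, 'u::ab_group_add, 'v::ab_group_add) rep
    \<Rightarrow> ('u \<Rightarrow> (nat \<Rightarrow> 'u) \<times> 'v) \<times> ('v \<Rightarrow> (nat \<Rightarrow> 'u) \<times> 'v)" where
  "eta r = (\<lambda>u. (at0 u, 0), \<lambda>v. (0, v))"

definition eta_inv :: "((nat \<Rightarrow> 'u::zero) \<times> 'v \<Rightarrow> 'u) \<times> ((nat \<Rightarrow> 'u) \<times> 'v \<Rightarrow> 'v)" where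
  "eta_inv = (\<lambda>p. fst p 0, snd)"

lemma at0_fsupp: "0 \<in> U \<Longrightarrow> u \<in> U \<Longrightarrow> at0 u \<in> fsupp U"
  unfolding fsupp_def at0_def by (auto intro: finite_subset[of _ "{0}"])

context gamma_rep
begin

lemma Mu_Xi_Psi: "Mu (Xi (Psi r)) = (\<lambda>u. (at0 u, 0)) ` Mu r"
  unfolding Psi_def Xi_simps
proof (intro equalityI subsetI)
  fix p assume "p \<in> {m \<in> car (Psi_mod r). xo (Psi_mod r) m = 0}"
  then obtain g v where p: "p = (g, v)" "g \<in> fsupp (Mu r)" "v \<in> Mv r"
    and x: "xo (Psi_mod r) (g, v) = 0"
    by (auto simp: Psi_mod_simps)
  from x have "\<And>a. g (Suc a) = 0" "pf r v = 0"
    by (simp_all add: Psi_mod_simps zero_prod_def fun_eq_iff)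
  then have "g = at0 (g 0)" "v = 0"
    using pf_pow_eq_zero[of v 1] p(3) by (auto simp: at0_def fun_eq_iff gr0_conv_Suc)
  then show "p \<in> (\<lambda>u. (at0 u, 0)) ` Mu r"
    using p fsupp_closed by (metis image_eqI)
next
  fix p :: "(nat \<Rightarrow> 'u) \<times> 'v" assume "p \<in> (\<lambda>u. (at0 u, 0)) ` Mu r"
  then obtain u where "u \<in> Mu r" "p = (at0 u, 0)" by blast
  then show "p \<in> {m \<in> car (Psi_mod r). xo (Psi_mod r) m = 0}"
    using at0_fsupp[OF kspace_zero[OF kspace_u]] kspace_zero[OF kspace_v] pf_zero
    by (simp add: Psi_mod_simps at0_def zero_prod_def zero_fun_def)
qed

lemma Xi_Psi_simps:
  "Mu (Xi (Psi r)) = (\<lambda>u. (at0 u, 0)) ` Mu r" "Mv (Xi (Psi r)) = (\<lambda>v. (0, v)) ` Mv r"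
  "scu (Xi (Psi r)) = sc (Psi_mod r)" "scv (Xi (Psi r)) = sc (Psi_mod r)"
  "pf (Xi (Psi r)) = xo (Psi_mod r)"
  using Mu_Xi_Psi unfolding Psi_def Xi_simps imal_Psi by simp_all

lemma pe_Xi_Psi: "v \<in> Mv r \<Longrightarrow> pe (Xi (Psi r)) (0, v) = (at0 (pe r v), 0)"
  using Psi.pe_Xi[of "(0, v)"] kspace_zero[OF kspace_fsupp[OF kspace_u]]
  by (simp add: Psi_def Psi_mod_simps proj_Psi at0_def fun_eq_iff)

lemma dmor_eta: "dmor r (Xi (Psi r)) (eta r)"
proof -
  have "klin (scu r) (scu (Xi (Psi r))) (Mu r) (Mu (Xi (Psi r))) (fst (eta r))"
    using kspace_scale_zero[OF kspace_u] kspace_scale_zero[OF kspace_v]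
    by (intro klinI) (auto simp: Xi_Psi_simps eta_def Psi_mod_simps at0_def fun_eq_iff)
  moreover have "klin (scv r) (scv (Xi (Psi r))) (Mv r) (Mv (Xi (Psi r))) (snd (eta r))"
    using kspace_scale_zero[OF kspace_u]
    by (intro klinI) (auto simp: Xi_Psi_simps eta_def Psi_mod_simps fun_eq_iff)
  ultimately show ?thesis
    unfolding dmor_def using pe_Xi_Psi
    by (simp add: eta_def Xi_Psi_simps Psi_mod_simps zero_fun_def)
qed

lemma dmor_eta_inv: "dmor (Xi (Psi r)) r eta_inv"
proof -
  have "klin (scu (Xi (Psi r))) (scu r) (Mu (Xi (Psi r))) (Mu r) (fst eta_inv)"
    by (intro klinI) (auto simp: Xi_Psi_simps eta_inv_def Psi_mod_simps at0_def
        kspace_add[OF kspace_u] kspace_scale[OF kspace_u])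
  moreover have "klin (scv (Xi (Psi r))) (scv r) (Mv (Xi (Psi r))) (Mv r) (snd eta_inv)"
    by (intro klinI) (auto simp: Xi_Psi_simps eta_inv_def Psi_mod_simps
        kspace_add[OF kspace_v] kspace_scale[OF kspace_v])
  ultimately show ?thesis
    unfolding dmor_def Xi_Psi_simps
    by (auto simp: eta_inv_def pe_Xi_Psi Psi_mod_simps at0_def)
qed

lemma diso_eta: "diso r (Xi (Psi r)) (eta r)"
  unfolding diso_def
  using dmor_eta dmor_eta_inv
  by (intro conjI exI[of _ eta_inv]) (auto simp: eta_def eta_inv_def at0_def Xi_Psi_simps)

end

lemma PsiM_eta:
  assumes "gamma_rep r" "dmor r s f"
  shows "PsiM f (fst (eta r) u) = fst (eta s) (fst f u)"
    and "PsiM f (snd (eta r) v) = snd (eta s) (snd f v)"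
  using dmor_u_zero[OF assms] dmor_v_zero[OF assms]
  by (simp_all add: eta_def at0_def fun_eq_iff)

section \<open>The counit \<open>\<Psi>(\<Xi>(M, \<alpha>)) \<cong> (M, \<alpha>)\<close>\<close>

text \<open>\<open>(y\<^sup>a f\<^sub>1 \<otimes> u, v) \<mapsto> y\<^sup>a u + v\<close>; the inverse reads the coefficients of the
  \<open>I M\<close>-component n off as \<open>f\<^sub>1(x\<^sup>a n)\<close>, by the telescoping identity.\<close>
definition eps :: "('k::field, 'm::ab_group_add) cob \<Rightarrow> (nat \<Rightarrow> 'm) \<times> 'm \<Rightarrow> 'm" where
  "eps A p = snd p + (\<Sum>a\<in>{a. fst p a \<noteq> 0}. (yo (fst A) ^^ a) (fst p a))"

definition eps_inv :: "('k::field, 'm::ab_group_add) cob \<Rightarrow> 'm \<Rightarrow> (nat \<Rightarrow> 'm) \<times> 'm" where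
  "eps_inv A m =
     (\<lambda>a. f1 (fst A) ((xo (fst A) ^^ a) (m - proj (fst A) (snd A) m)), proj (fst A) (snd A) m)"

context rmodule
begin

lemma eps_eq:
  assumes "\<And>a. N \<le> a \<Longrightarrow> g a = 0"
  shows "eps (M, \<alpha>) (g, v) = v + (\<Sum>a<N. (yo M ^^ a) (g a))"
  unfolding eps_def using support_subset_lessThan[of N g, OF assms]
  by (simp add: ypow_zero sum.mono_neutral_left)

lemma ysum_closed: "(\<And>a. g a \<in> car M) \<Longrightarrow> (\<Sum>a<N. (yo M ^^ a) (g a)) \<in> car M"
  by (rule add_subgroup_sum[OF add_subgroup ypow_closed])

lemma ysum_IM:
  assumes "\<And>a. g a \<in> car M" "\<And>a. xo M (g a) = 0"
  shows "(\<Sum>a<N. (yo M ^^ a) (g a)) \<in> IM M"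
proof -
  have "(yo M ^^ a) (g b) \<in> x_nilpotent M" for a b
  proof (induction a)
    case 0
    show ?case using assms unfolding x_nilpotent_def by (auto intro!: exI[of _ 1])
  qed (simp add: x_nilpotent_y)
  then show ?thesis
    unfolding IM_eq_x_nilpotent by (intro add_subgroup_sum[OF x_nilpotent_add_subgroup])
qed

lemma f1_xpow_ysum:
  assumes "\<And>a. g a \<in> car M" "\<And>a. xo M (g a) = 0" "\<And>a. N \<le> a \<Longrightarrow> g a = 0"
  shows "f1 M ((xo M ^^ b) (\<Sum>a<N. (yo M ^^ a) (g a))) = g b"
proof -
  have "f1 M ((xo M ^^ b) (\<Sum>a<N. (yo M ^^ a) (g a)))
      = (\<Sum>a<N. f1 M ((xo M ^^ b) ((yo M ^^ a) (g a))))"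
    using additive_on_sum[OF add_subgroup xpow_additive, where h = "\<lambda>a. (yo M ^^ a) (g a)"]
      additive_on_sum[OF add_subgroup f1_additive, where h = "\<lambda>a. (xo M ^^ b) ((yo M ^^ a) (g a))"]
      ypow_closed[OF assms(1)] xpow_closed by simp
  also have "\<dots> = (\<Sum>a<N. if a = b then g a else 0)"
    using f1_xpow_ypow[OF assms(1,2)] by simp
  also have "\<dots> = g b" using assms(3)[of b] by (cases "b < N") simp_all
  finally show ?thesis .
qed

context
  fixes g :: "nat \<Rightarrow> 'm" and v :: 'm and N :: nat
  assumes g: "\<And>a. g a \<in> car M" and v: "v \<in> car M" and N: "\<And>a. N \<le> a \<Longrightarrow> g a = 0"
begin

lemma eps_closed: "eps (M, \<alpha>) (g, v) \<in> car M"
  using eps_eq[OF N] add_closed[OF v ysum_closed[of g N, OF g]] by simp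

lemma eps_add:
  assumes h: "\<And>a. h a \<in> car M" and "\<And>a. K \<le> a \<Longrightarrow> h a = 0"
  shows "eps (M, \<alpha>) (g + h, v + w) = eps (M, \<alpha>) (g, v) + eps (M, \<alpha>) (h, w)"
proof -
  have "eps (M, \<alpha>) (g + h, v + w) = (v + w) + (\<Sum>a<N + K. (yo M ^^ a) (g a) + (yo M ^^ a) (h a))"
    using eps_eq[of "N + K" "g + h"] N assms(2)
      additive_on_add[OF add_subgroup ypow_additive g h] by simp
  also have "\<dots> = eps (M, \<alpha>) (g, v) + eps (M, \<alpha>) (h, w)"
    using eps_eq[of "N + K" g] eps_eq[of "N + K" h] N assms(2)
    by (simp add: sum.distrib algebra_simps)
  finally show ?thesis .
qed

lemma eps_scale: "eps (M, \<alpha>) (\<lambda>a. sc M c (g a), sc M c v) = sc M c (eps (M, \<alpha>) (g, v))"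
proof -
  have "(\<Sum>a<N. (yo M ^^ a) (sc M c (g a))) = sc M c (\<Sum>a<N. (yo M ^^ a) (g a))"
    using additive_on_sum[OF add_subgroup kspace_scale_additive[OF kspace],
        where h = "\<lambda>a. (yo M ^^ a) (g a)" and S = "{..<N}"] ypow_closed[OF g]
    by (simp add: ypow_scale g)
  then show ?thesis
    using eps_eq[OF N] eps_eq[of N "\<lambda>a. sc M c (g a)"] N kspace_scale_zero[OF kspace]
      kspace_scale_add[OF kspace v ysum_closed[of g N, OF g]] by simp
qed

lemma eps_x:
  assumes "\<And>a. xo M (g a) = 0"
  shows "eps (M, \<alpha>) (\<lambda>a. g (Suc a), xo M v) = xo M (eps (M, \<alpha>) (g, v))"
proof -
  have "xo M (\<Sum>a<Suc N. (yo M ^^ a) (g a)) = (\<Sum>a<Suc N. xo M ((yo M ^^ a) (g a)))"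
    using additive_on_sum[OF add_subgroup x_additive ypow_closed[OF g]] .
  also have "\<dots> = (\<Sum>a<N. (yo M ^^ a) (g (Suc a)))"
    using assms by (simp add: sum.lessThan_Suc_shift x_y ypow_closed g del: sum.lessThan_Suc)
  finally show ?thesis
    using eps_eq[of "Suc N" g] eps_eq[of N "\<lambda>a. g (Suc a)"] N
      additive_on_add[OF add_subgroup x_additive v ysum_closed[of g "Suc N", OF g]]
    by (simp del: sum.lessThan_Suc)
qed

end

end

context weak_splitting
begin

lemma car_Psi_XiE:
  assumes "p \<in> car (Psi_mod (Xi (M, \<alpha>)))"
  obtains g v N where "p = (g, v)" "\<And>a. g a \<in> car M" "\<And>a. xo M (g a) = 0" "v \<in> imal M \<alpha>"
    "\<And>a. N \<le> a \<Longrightarrow> g a = 0"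
proof -
  obtain g v where gv: "p = (g, v)" "g \<in> fsupp {m \<in> car M. xo M m = 0}" "v \<in> imal M \<alpha>"
    using assms by (auto simp: Psi_mod_simps Xi_simps)
  obtain N where "\<And>a. N \<le> a \<Longrightarrow> g a = 0" using fsupp_bound[OF gv(2)] by blast
  moreover have "g a \<in> car M" "xo M (g a) = 0" for a
    using fsupp_closed[OF gv(2), of a] by simp_all
  ultimately show thesis using that gv(1,3) by blast
qed

lemma pf_inv_Xi:
  assumes "w \<in> imal M \<alpha>"
  shows "the_inv_into (imal M \<alpha>) (xo M) w = proj M \<alpha> (yo M w)"
proof (rule the_inv_into_f_eq[OF bij_betw_imp_inj_on[OF bij_x_imal]])
  show "xo M (proj M \<alpha> (yo M w)) = w"
    using proj_x[OF y_closed, symmetric] x_y proj_imal imal_closed assms by simp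
  show "proj M \<alpha> (yo M w) \<in> imal M \<alpha>"
    unfolding imal_eq using y_closed imal_closed assms by blast
qed

lemma eps_y:
  assumes g: "\<And>a. g a \<in> car M" and v: "v \<in> imal M \<alpha>" and N: "\<And>a. N \<le> a \<Longrightarrow> g a = 0"
  shows "eps (M, \<alpha>) (yo (Psi_mod (Xi (M, \<alpha>))) (g, v)) = yo M (eps (M, \<alpha>) (g, v))"
proof -
  have "yo (Psi_mod (Xi (M, \<alpha>))) (g, v) =
      (\<lambda>a. if a = 0 then yo M v - proj M \<alpha> (yo M v) else g (a - 1), proj M \<alpha> (yo M v))"
    using pe_Xi[OF imal_closed[OF v]] pf_inv_Xi[OF v]
    by (simp add: Psi_mod_simps Xi_simps(2,5) fun_eq_iff)
  then have "eps (M, \<alpha>) (yo (Psi_mod (Xi (M, \<alpha>))) (g, v))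
      = proj M \<alpha> (yo M v) + ((yo M v - proj M \<alpha> (yo M v)) + (\<Sum>a<N. (yo M ^^ Suc a) (g a)))"
    using eps_eq[of "Suc N"] N by (simp add: sum.lessThan_Suc_shift del: sum.lessThan_Suc)
  also have "\<dots> = yo M v + yo M (\<Sum>a<N. (yo M ^^ a) (g a))"
    using additive_on_sum[OF add_subgroup y_additive,
        where h = "\<lambda>a. (yo M ^^ a) (g a)" and S = "{..<N}"] ypow_closed[OF g] by simp
  also have "\<dots> = yo M (eps (M, \<alpha>) (g, v))"
    using eps_eq[OF N] additive_on_add[OF add_subgroup y_additive imal_closed[OF v] ysum_closed[of g N, OF g]]
    by simp
  finally show ?thesis .
qed

lemma rlin_eps: "rlin (Psi_mod (Xi (M, \<alpha>))) M (eps (M, \<alpha>))"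
  unfolding rlin_def
proof (intro conjI klinI ballI)
  fix p q c assume p: "p \<in> car (Psi_mod (Xi (M, \<alpha>)))"
  obtain g v N where g: "p = (g, v)" "\<And>a. g a \<in> car M" "\<And>a. xo M (g a) = 0" "v \<in> imal M \<alpha>"
    "\<And>a. N \<le> a \<Longrightarrow> g a = 0"
    using car_Psi_XiE[OF p] by blast
  note v = imal_closed[OF g(4)]
  show "eps (M, \<alpha>) p \<in> car M"
    unfolding g(1) using eps_closed[OF g(2) v g(5)] .
  show "eps (M, \<alpha>) (sc (Psi_mod (Xi (M, \<alpha>))) c p) = sc M c (eps (M, \<alpha>) p)"
    unfolding g(1) using eps_scale[OF g(2) v g(5)] by (simp add: Psi_mod_simps Xi_simps)
  show "eps (M, \<alpha>) (xo (Psi_mod (Xi (M, \<alpha>))) p) = xo M (eps (M, \<alpha>) p)"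
    unfolding g(1) using eps_x[OF g(2) v g(5) g(3)] by (simp add: Psi_mod_simps Xi_simps)
  show "eps (M, \<alpha>) (yo (Psi_mod (Xi (M, \<alpha>))) p) = yo M (eps (M, \<alpha>) p)"
    unfolding g(1) using eps_y[OF g(2,4,5)] .
  assume "q \<in> car (Psi_mod (Xi (M, \<alpha>)))"
  then obtain h w K where h: "q = (h, w)" "\<And>a. h a \<in> car M" "\<And>a. K \<le> a \<Longrightarrow> h a = 0"
    by (rule car_Psi_XiE) blast
  show "eps (M, \<alpha>) (p + q) = eps (M, \<alpha>) p + eps (M, \<alpha>) q"
    unfolding g(1) h(1) using eps_add[OF g(2) v g(5) h(2,3)] by simp
qed

lemma eps_inv_bound:
  assumes "m \<in> car M"
  obtains K where "(xo M ^^ K) (m - proj M \<alpha> m) = 0" "\<And>a. K \<le> a \<Longrightarrow> fst (eps_inv (M, \<alpha>) m) a = 0"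
proof -
  obtain K where K: "(xo M ^^ K) (m - proj M \<alpha> m) = 0"
    using IM_component[OF assms] unfolding IM_eq_x_nilpotent x_nilpotent_def by blast
  have "(xo M ^^ a) (m - proj M \<alpha> m) = 0" if "K \<le> a" for a
    using K xpow_zero funpow_add[of "a - K" K "xo M"] that by simp
  then show thesis by (intro that[OF K]) (simp add: eps_inv_def f1_zero)
qed

lemma eps_inv_closed:
  assumes "m \<in> car M"
  shows "eps_inv (M, \<alpha>) m \<in> car (Psi_mod (Xi (M, \<alpha>)))"
proof -
  obtain K where K: "\<And>a. K \<le> a \<Longrightarrow> fst (eps_inv (M, \<alpha>) m) a = 0"
    using eps_inv_bound[OF assms] by blast
  have "finite {a. fst (eps_inv (M, \<alpha>) m) a \<noteq> 0}"
    using finite_subset[OF support_subset_lessThan[of K "fst (eps_inv (M, \<alpha>) m)", OF K]] by blast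
  moreover have "fst (eps_inv (M, \<alpha>) m) a \<in> {m \<in> car M. xo M m = 0}" for a
    using f1_closed x_f1 xpow_closed diff_closed[OF assms proj_closed[OF assms]]
    by (simp add: eps_inv_def)
  moreover have "snd (eps_inv (M, \<alpha>) m) \<in> imal M \<alpha>"
    unfolding eps_inv_def imal_eq using assms by simp
  ultimately show ?thesis
    by (auto simp: Psi_mod_simps Xi_simps fsupp_def mem_Times_iff)
qed

lemma eps_eps_inv:
  assumes "m \<in> car M"
  shows "eps (M, \<alpha>) (eps_inv (M, \<alpha>) m) = m"
proof -
  obtain K where K: "(xo M ^^ K) (m - proj M \<alpha> m) = 0"
    "\<And>a. K \<le> a \<Longrightarrow> fst (eps_inv (M, \<alpha>) m) a = 0"
    using eps_inv_bound[OF assms] by blast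
  have "eps (M, \<alpha>) (eps_inv (M, \<alpha>) m) = proj M \<alpha> m + (m - proj M \<alpha> m)"
    using eps_eq[of K] K f1_telescope[OF diff_closed[OF assms proj_closed[OF assms]], of K]
    by (simp add: eps_inv_def ypow_zero)
  then show ?thesis by simp
qed

lemma eps_inv_eps:
  assumes "p \<in> car (Psi_mod (Xi (M, \<alpha>)))"
  shows "eps_inv (M, \<alpha>) (eps (M, \<alpha>) p) = p"
proof -
  obtain g v N where g: "p = (g, v)" "\<And>a. g a \<in> car M" "\<And>a. xo M (g a) = 0" "v \<in> imal M \<alpha>"
    "\<And>a. N \<le> a \<Longrightarrow> g a = 0"
    using car_Psi_XiE[OF assms] by blast
  define s where "s = (\<Sum>a<N. (yo M ^^ a) (g a))"
  have s: "s \<in> car M" unfolding s_def using ysum_closed g(2) by blast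
  have proj_sum: "proj M \<alpha> (v + s) = v"
    using proj_add[OF imal_closed[OF g(4)] s] proj_imal[OF g(4)] proj_IM ysum_IM[OF g(2,3)]
    unfolding s_def by simp
  have "eps (M, \<alpha>) p = v + s"
    using eps_eq[of N g, OF g(5)] unfolding g(1) s_def by simp
  then show ?thesis
    using proj_sum f1_xpow_ysum[OF g(2,3,5)]
    unfolding g(1) eps_inv_def s_def by (simp add: fun_eq_iff)
qed

lemma ciso_eps: "ciso (Psi (Xi (M, \<alpha>))) (M, \<alpha>) (eps (M, \<alpha>))"
proof -
  interpret X: gamma_rep "Xi (M, \<alpha>)"
    using drep_Xi by unfold_locales
  have imal: "imal (Psi_mod (Xi (M, \<alpha>))) Psi_alpha = (\<lambda>v. (0, v)) ` imal M \<alpha>"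
    unfolding X.imal_Psi Xi_simps ..
  have "eps (M, \<alpha>) ` imal (Psi_mod (Xi (M, \<alpha>))) Psi_alpha \<subseteq> imal M \<alpha>"
    unfolding imal eps_def by auto
  moreover have "eps_inv (M, \<alpha>) ` imal M \<alpha> \<subseteq> imal (Psi_mod (Xi (M, \<alpha>))) Psi_alpha"
    unfolding imal eps_inv_def
    by (auto simp: proj_imal xpow_zero f1_zero zero_fun_def[symmetric] intro!: image_eqI)
  moreover have "rlin M (Psi_mod (Xi (M, \<alpha>))) (eps_inv (M, \<alpha>))"
    using X.Psi.rlin_inverse[OF rlin_eps] eps_inv_closed eps_eps_inv eps_inv_eps by blast
  ultimately show ?thesis
    unfolding ciso_def cmor_def Psi_def
    using rlin_eps eps_eps_inv eps_inv_eps by auto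
qed

end

lemma eps_natural:
  assumes "weak_splitting M \<alpha>" "weak_splitting N \<beta>" "cmor (M, \<alpha>) (N, \<beta>) f"
    "p \<in> car (Psi_mod (Xi (M, \<alpha>)))"
  shows "f (eps (M, \<alpha>) p) = eps (N, \<beta>) (PsiM (XiM f) p)"
proof -
  interpret M: weak_splitting M \<alpha> by fact
  interpret N: weak_splitting N \<beta> by fact
  have f: "rlin M N f" using assms(3) unfolding cmor_def by simp
  obtain g v K where g: "p = (g, v)" "\<And>a. g a \<in> car M" "v \<in> imal M \<alpha>"
    "\<And>a. K \<le> a \<Longrightarrow> g a = 0"
    using M.car_Psi_XiE[OF assms(4)] by metis
  have "f (eps (M, \<alpha>) p) = f v + (\<Sum>a<K. f ((yo M ^^ a) (g a)))"
    using M.eps_eq[OF g(4)] additive_on_add[OF M.add_subgroup rlin_additive[OF f]]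
      additive_on_sum[OF M.add_subgroup rlin_additive[OF f], where h = "\<lambda>a. (yo M ^^ a) (g a)"]
      M.imal_closed[OF g(3)] M.ysum_closed[OF g(2)] M.ypow_closed[OF g(2)]
    unfolding g(1) by simp
  also have "\<dots> = eps (N, \<beta>) (f \<circ> g, f v)"
    using N.eps_eq[of K "f \<circ> g"] g(4) M.rlin_zero[OF f] M.rlin_ypow[OF f g(2)] by simp
  finally show ?thesis unfolding g(1) XiM_def by simp
qed

lemma cobj_weak_splitting: "cobj A \<longleftrightarrow> weak_splitting (fst A) (snd A)"
  unfolding cobj_def weak_splitting_def ..

lemma drep_gamma_rep: "drep r \<longleftrightarrow> gamma_rep r"
  unfolding gamma_rep_def ..

lemma PsiM_id: "PsiM (id, id) p = p"
  by (cases p) simp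

lemma PsiM_comp: "PsiM (fst g \<circ> fst f, snd g \<circ> snd f) p = PsiM g (PsiM f p)"
  by (cases p) (simp add: comp_assoc)

lemma XiM_simps: "fst (XiM f) = f" "snd (XiM f) = f"
  unfolding XiM_def by simp_all

lemma diso_eta_drep: "drep r \<Longrightarrow> diso r (Xi (Psi r)) (eta r)"
  unfolding drep_gamma_rep by (rule gamma_rep.diso_eta)

lemma cobj_Psi: "drep r \<Longrightarrow> cobj (Psi r)"
  unfolding cobj_def Psi_def drep_gamma_rep by (simp add: gamma_rep.wsp_Psi)

lemma drep_Xi_cobj: "cobj A \<Longrightarrow> drep (Xi A)"
  unfolding cobj_weak_splitting by (cases A) (simp add: weak_splitting.drep_Xi)

lemma dmor_Xi_cmor: "cobj A \<Longrightarrow> cobj B \<Longrightarrow> cmor A B f \<Longrightarrow> dmor (Xi A) (Xi B) (XiM f)"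
  unfolding cobj_weak_splitting XiM_def by (cases A, cases B) (simp add: dmor_Xi)

lemma ciso_eps_cobj: "cobj A \<Longrightarrow> ciso (Psi (Xi A)) A (eps A)"
  unfolding cobj_weak_splitting by (cases A) (simp add: weak_splitting.ciso_eps)

lemma eps_natural_cobj:
  "cobj A \<Longrightarrow> cobj B \<Longrightarrow> cmor A B f \<Longrightarrow> p \<in> car (fst (Psi (Xi A)))
    \<Longrightarrow> f (eps A p) = eps B (PsiM (XiM f) p)"
  unfolding cobj_weak_splitting Psi_def by (cases A, cases B) (simp add: eps_natural)

theorem theorem6:
  shows
  \<comment> \<open>Psi is a functor D -> C\<close>
  "(\<forall>r :: ('k::field, 'u::ab_group_add, 'v::ab_group_add) rep. drep r \<longrightarrow> cobj (Psi r))
   \<and> (\<forall>(r :: ('k, 'u, 'v) rep) (s :: ('k, 'u2::ab_group_add, 'v2::ab_group_add) rep) f.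
        drep r \<and> drep s \<and> dmor r s f \<longrightarrow> cmor (Psi r) (Psi s) (PsiM f))
   \<and> (\<forall>r :: ('k, 'u, 'v) rep. drep r \<longrightarrow>
        (\<forall>p\<in>car (fst (Psi r)). PsiM (id :: 'u \<Rightarrow> 'u, id :: 'v \<Rightarrow> 'v) p = p))
   \<and> (\<forall>(r :: ('k, 'u, 'v) rep) (s :: ('k, 'u2, 'v2) rep)
        (t :: ('k, 'u3::ab_group_add, 'v3::ab_group_add) rep) f g.
        drep r \<and> drep s \<and> drep t \<and> dmor r s f \<and> dmor s t g \<longrightarrow>
        (\<forall>p\<in>car (fst (Psi r)).
           PsiM (fst g \<circ> fst f, snd g \<circ> snd f) p = PsiM g (PsiM f p)))
  \<comment> \<open>Xi is a functor C -> D\<close>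
   \<and> (\<forall>A :: ('k, 'm::ab_group_add) cob. cobj A \<longrightarrow> drep (Xi A))
   \<and> (\<forall>(A :: ('k, 'm) cob) (B :: ('k, 'n::ab_group_add) cob) f.
        cobj A \<and> cobj B \<and> cmor A B f \<longrightarrow> dmor (Xi A) (Xi B) (XiM f))
   \<and> (\<forall>A :: ('k, 'm) cob. cobj A \<longrightarrow>
        (\<forall>a\<in>Mu (Xi A). fst (XiM (id :: 'm \<Rightarrow> 'm)) a = a) \<and> (\<forall>a\<in>Mv (Xi A). snd (XiM (id :: 'm \<Rightarrow> 'm)) a = a))
   \<and> (\<forall>(A :: ('k, 'm) cob) (B :: ('k, 'n) cob) (C :: ('k, 'p::ab_group_add) cob) f g.
        cobj A \<and> cobj B \<and> cobj C \<and> cmor A B f \<and> cmor B C g \<longrightarrow>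
        (\<forall>a\<in>Mu (Xi A). fst (XiM (g \<circ> f)) a = fst (XiM g) (fst (XiM f) a))
        \<and> (\<forall>a\<in>Mv (Xi A). snd (XiM (g \<circ> f)) a = snd (XiM g) (snd (XiM f) a)))
  \<comment> \<open>natural isomorphism Id_D => Xi o Psi\<close>
   \<and> (\<exists>(\<eta>1 :: ('k, 'u, 'v) rep \<Rightarrow> ('u \<Rightarrow> (nat \<Rightarrow> 'u) \<times> 'v) \<times> ('v \<Rightarrow> (nat \<Rightarrow> 'u) \<times> 'v))
       (\<eta>2 :: ('k, 'u2, 'v2) rep \<Rightarrow> ('u2 \<Rightarrow> (nat \<Rightarrow> 'u2) \<times> 'v2) \<times> ('v2 \<Rightarrow> (nat \<Rightarrow> 'u2) \<times> 'v2)).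
        (\<forall>r. drep r \<longrightarrow> diso r (Xi (Psi r)) (\<eta>1 r))
        \<and> (\<forall>s. drep s \<longrightarrow> diso s (Xi (Psi s)) (\<eta>2 s))
        \<and> (\<forall>r s f. drep r \<and> drep s \<and> dmor r s f \<longrightarrow>
             (\<forall>a\<in>Mu r. fst (XiM (PsiM f)) (fst (\<eta>1 r) a) = fst (\<eta>2 s) (fst f a))
             \<and> (\<forall>a\<in>Mv r. snd (XiM (PsiM f)) (snd (\<eta>1 r) a) = snd (\<eta>2 s) (snd f a))))
  \<comment> \<open>natural isomorphism Psi o Xi => Id_C\<close>
   \<and> (\<exists>(\<epsilon>1 :: ('k, 'm) cob \<Rightarrow> (nat \<Rightarrow> 'm) \<times> 'm \<Rightarrow> 'm)
       (\<epsilon>2 :: ('k, 'n) cob \<Rightarrow> (nat \<Rightarrow> 'n) \<times> 'n \<Rightarrow> 'n).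
        (\<forall>A. cobj A \<longrightarrow> ciso (Psi (Xi A)) A (\<epsilon>1 A))
        \<and> (\<forall>B. cobj B \<longrightarrow> ciso (Psi (Xi B)) B (\<epsilon>2 B))
        \<and> (\<forall>A B f. cobj A \<and> cobj B \<and> cmor A B f \<longrightarrow>
             (\<forall>p\<in>car (fst (Psi (Xi A))). f (\<epsilon>1 A p) = \<epsilon>2 B (PsiM (XiM f) p))))"
proof (intro conjI allI impI ballI exI[of _ eta] exI[of _ eps]; (elim conjE)?)
qed (simp_all add: cobj_Psi cmor_PsiM[folded drep_gamma_rep] drep_Xi_cobj dmor_Xi_cmor diso_eta_drep
    PsiM_eta[folded drep_gamma_rep] XiM_simps ciso_eps_cobj eps_natural_cobj PsiM_id PsiM_comp)

end
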